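(* Let $a=\{a_1,\dots,a_m\}$ be a set of positive rational numbers different from $1$. Then there exist integers $b_1,b_2,\dots$ (depending only on $a$ and the index, not on $t$) such that, as formal power series in $x$ with coefficients in $\mathbb{Q}[t]$, $$\sum_{n\ge 0}\chi_{\mathcal{A}_n(a)}(t)\frac{x^n}{n!}=\exp\Big[\sum_{n\ge 1}b_n(t-1)\frac{x^n}{n!}\Big].$$ Moreover, for fixed $m$ and $n$, the integer $b_n$ is the same for all multiplicatively independent sets $a$ of size $m$.
   Context: A set $\{a_1,\dots,a_m\}$ of positive rational numbers is multiplicatively independent if $a_1^{i_1}\cdots a_m^{i_m}=1$ with integers $i_1,\dots,i_m$ implies $i_1=\dots=i_m=0$. For a set $a=\{a_1,\dots,a_m\}$ of positive rational numbers different from $1$ and $n\ge 1$, $\mathcal{A}_n(a)$ denotes the hyperplane arrangement in $\mathbb{R}^n$ consisting of the hyperplanes $x_i=0$ ($1\le i\le n$), $x_i=x_j$ ($1\le i<j\le n$), and $x_i=a_rx_j$ ($1\le i\neq j\le n$, $1\le r\le m$); $\mathcal{A}_0(a)$ is the empty arrangement in $\mathbb{R}^0$, with characteristic polynomial $1$. For a finite arrangement $\mathcal{A}$ of affine hyperplanes in $\mathbb{R}^n$, the characteristic polynomial is $\chi_{\mathcal{A}}(t)=\sum_{\mathcal{B}}(-1)^{\#\mathcal{B}}t^{n-\operatorname{rank}(\mathcal{B})}$, the sum over subsets $\mathcal{B}\subseteq\mathcal{A}$ whose hyperplanes have nonempty common intersection, where $\operatorname{rank}(\mathcal{B})$ is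 the dimension of the span of the normal vectors of the hyperplanes in $\mathcal{B}$. *)

theory Defs
  imports "HOL-Analysis.Analysis" "HOL-Library.Function_Algebras"
    "HOL-Computational_Algebra.Formal_Power_Series"
    "HOL-Computational_Algebra.Polynomial"
begin

text \<open>Points of R^n are modelled as functions nat => real vanishing outside {0..<n}
  (coordinates are indexed 0..n-1 instead of 1..n).\<close>

definition Rn :: "nat \<Rightarrow> (nat \<Rightarrow> real) set" where
  "Rn n = {x. \<forall>i\<ge>n. x i = 0}"

definition dotn :: "nat \<Rightarrow> (nat \<Rightarrow> real) \<Rightarrow> (nat \<Rightarrow> real) \<Rightarrow> real" where
  "dotn n c x = (\<Sum>i<n. c i * x i)"

definition hyp :: "nat \<Rightarrow> (nat \<Rightarrow> real) \<Rightarrow> real \<Rightarrow> (nat \<Rightarrow> real) set" where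
  "hyp n c d = {x \<in> Rn n. dotn n c x = d}"

definition vscale :: "real \<Rightarrow> (nat \<Rightarrow> real) \<Rightarrow> (nat \<Rightarrow> real)" where
  "vscale r f = (\<lambda>i. r * f i)"

definition normals :: "nat \<Rightarrow> (nat \<Rightarrow> real) set set \<Rightarrow> (nat \<Rightarrow> real) set" where
  "normals n B = {c \<in> Rn n. c \<noteq> 0 \<and> (\<exists>d. hyp n c d \<in> B)}"

definition arr_rank :: "nat \<Rightarrow> (nat \<Rightarrow> real) set set \<Rightarrow> nat" where
  "arr_rank n B = vector_space.dim vscale (normals n B)"

definition char_poly :: "nat \<Rightarrow> (nat \<Rightarrow> real) set set \<Rightarrow> rat poly" where
  "char_poly n A = (\<Sum>B\<in>{B. B \<subseteq> A \<and> Rn n \<inter> \<Inter>B \<noteq> {}}.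
      (-1) ^ card B * monom 1 (n - arr_rank n B))"

definition unitv :: "nat \<Rightarrow> nat \<Rightarrow> real" where
  "unitv i = (\<lambda>k. if k = i then 1 else 0)"

definition arrA :: "nat \<Rightarrow> rat set \<Rightarrow> (nat \<Rightarrow> real) set set" where
  "arrA n a =
     {hyp n (unitv i) 0 | i. i < n}
   \<union> {hyp n (\<lambda>k. unitv i k - unitv j k) 0 | i j. i < j \<and> j < n}
   \<union> {hyp n (\<lambda>k. unitv i k - real_of_rat r * unitv j k) 0 | i j r. i < n \<and> j < n \<and> i \<noteq> j \<and> r \<in> a}"

definition mult_indep :: "rat set \<Rightarrow> bool" where
  "mult_indep a \<longleftrightarrow> (\<forall>e :: rat \<Rightarrow> int. (\<Prod>r\<in>a. r powi e r) = 1 \<longrightarrow> (\<forall>r\<in>a. e r = 0))"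

text \<open>Exponential of a power series over Q[t] with zero constant term: exp(G) = sum_k G^k/k!.\<close>
definition fps_exp_of :: "rat poly fps \<Rightarrow> rat poly fps" where
  "fps_exp_of G = fps_compose (Abs_fps (\<lambda>k. [:inverse (fact k):])) G"

definition char_egf :: "rat set \<Rightarrow> rat poly fps" where
  "char_egf a = Abs_fps (\<lambda>n. smult (inverse (fact n)) (char_poly n (arrA n a)))"

definition b_series :: "(nat \<Rightarrow> int) \<Rightarrow> rat poly fps" where
  "b_series b = Abs_fps (\<lambda>n. if n = 0 then 0 else smult (of_int (b n) / fact n) [:-1, 1:])"

end

theory Submission
  imports Defs
begin

text \<open>Label the hyperplanes of A_n(a) by x_i = 0 and x_i = r x_j with i < j and r in
  Q = {1} \<union> a \<union> a\<inverse>.  Since all of them pass through 0, the characteristic polynomial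
  is the sum of (-1)^|K| t^(n - rank K) over all label sets K.  The edge labels make K a graph on
  the coordinates; the rank is additive over disjoint vertex sets and invariant under
  order-preserving relabelling, so grouping K by the component of the last coordinate gives
  chi (n + 1) = \<Sum>j\<le>n. (n choose j) phi (j + 1) chi (n - j), where phi k sums over connected
  label sets on k vertices: the exponential generating function of chi is exp of that of phi.
  A connected label set on k vertices has rank k or k - 1, so phi k is linear, and it vanishes at
  t = 1 because chi n does for n > 0; hence phi k = b_k (t - 1).

  A connected label set has rank k - 1 exactly when it contains no coordinate label and the gains
  along its edges are consistent, i.e. every vertex gets a well-defined gain relative to the last
  one.  If a is multiplicatively independent these gains are monomials in a with well-defined
  exponent vectors, so any bijection between two independent sets of the same size transports
  consistent label sets to consistent ones, and b_k only depends on the size of a.\<close>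

section \<open>Dimension of spans\<close>

context vector_space
begin

lemma obtain_finite_basis:
  assumes "finite S"
  obtains B where "B \<subseteq> S" "independent B" "span B = span S" "card B = dim S" "finite B"
proof -
  obtain B where B: "B \<subseteq> S" "independent B" "S \<subseteq> span B" "card B = dim S"
    using basis_exists by blast
  then have "span B = span S"
    by (metis span_mono span_span subset_antisym)
  then show ?thesis
    using that B finite_subset[OF B(1) assms] by blast
qed

lemma dim_le_dim_if_subset_span:
  assumes "finite W" "X \<subseteq> span W"
  shows "dim X \<le> dim W"
proof -
  obtain B where B: "B \<subseteq> W" "span B = span W" "card B = dim W" "finite B"
    using obtain_finite_basis[OF assms(1)] by metis
  then show ?thesis
    using dim_le_card[of X B] assms(2) by simp
qed

lemma dim_insert_span: "x \<in> span S \<Longrightarrow> dim (insert x S) = dim S"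
  by (metis span_eq_dim span_redundant)

lemma dim_insert_not_in_span:
  assumes "finite S" "x \<notin> span S"
  shows "dim (insert x S) = Suc (dim S)"
proof -
  obtain B where B: "independent B" "span B = span S" "card B = dim S" "finite B"
    using obtain_finite_basis[OF assms(1)] by metis
  have "x \<notin> span B"
    using B(2) assms(2) by simp
  then have "independent (insert x B)" "x \<notin> B"
    using independent_insertI[OF _ B(1)] span_base by auto
  moreover have "span (insert x B) = span (insert x S)"
    using B(2) by (metis span_insert)
  ultimately show ?thesis
    using dim_eq_card B(3,4) by fastforce
qed

lemma dim_insert_le: "finite S \<Longrightarrow> dim (insert x S) \<le> Suc (dim S)"
  using dim_insert_not_in_span dim_insert_span by (cases "x \<in> span S") auto

lemma independent_Un:
  assumes "independent X" "independent Y" "finite Y" "span X \<inter> span Y \<subseteq> {0}"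
  shows "independent (X \<union> Y)"
  using assms(3,2,4)
proof (induction Y rule: finite_induct)
  case empty
  then show ?case using assms(1) by simp
next
  case (insert y Y)
  have "independent Y" and y: "y \<notin> span Y"
    using insert.prems(1) insert.hyps(2) independent_insert by auto
  moreover have "span Y \<subseteq> span (insert y Y)"
    by (simp add: span_mono subset_insertI)
  ultimately have IH: "independent (X \<union> Y)"
    using insert.IH insert.prems(2) by blast
  have "y \<notin> span (X \<union> Y)"
  proof
    assume "y \<in> span (X \<union> Y)"
    then obtain u w where uw: "y = u + w" "u \<in> span X" "w \<in> span Y"
      unfolding span_Un by blast
    have "w \<in> span (insert y Y)" "y \<in> span (insert y Y)"
      using uw(3) span_mono[of Y "insert y Y"] span_base by auto
    then have "u \<in> span (insert y Y)"
      using uw(1) span_diff[of y _ w] by force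
    then have "u = 0"
      using uw(2) insert.prems(2) by blast
    then show False
      using uw y by simp
  qed
  then show ?case
    using independent_insertI[OF _ IH] by simp
qed

lemma dim_Un_eq_add:
  assumes "finite A" "finite B" "span A \<inter> span B \<subseteq> {0}"
  shows "dim (A \<union> B) = dim A + dim B"
proof -
  obtain BA where BA: "independent BA" "span BA = span A" "card BA = dim A" "finite BA"
    using obtain_finite_basis[OF assms(1)] by metis
  obtain BB where BB: "independent BB" "span BB = span B" "card BB = dim B" "finite BB"
    using obtain_finite_basis[OF assms(2)] by metis
  have "independent (BA \<union> BB)"
    using independent_Un[OF BA(1) BB(1) BB(4)] assms(3) BA(2) BB(2) by simp
  moreover have "span (BA \<union> BB) = span (A \<union> B)"
    unfolding span_Un BA(2) BB(2) ..
  moreover have "BA \<inter> BB = {}"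
  proof -
    have "BA \<inter> BB \<subseteq> {0}"
      using assms(3) BA(2) BB(2) span_superset by blast
    then show ?thesis
      using BA(1) dependent_zero by blast
  qed
  ultimately show ?thesis
    using dim_eq_card card_Un_disjoint BA(3,4) BB(3,4) by metis
qed

end

context Vector_Spaces.linear
begin

lemma dim_image_eq_if_inj_on_span:
  assumes "finite S" "inj_on f (vs1.span S)"
  shows "vs2.dim (f ` S) = vs1.dim S"
proof -
  obtain B where B: "B \<subseteq> S" "vs1.independent B" "vs1.span B = vs1.span S" "card B = vs1.dim S"
    using vs1.obtain_finite_basis[OF assms(1)] by metis
  have inj: "inj_on f (vs1.span B)"
    using assms(2) B(3) by simp
  have "vs2.independent (f ` B)"
    using independent_injective_image[OF B(2) inj] .
  moreover have "vs2.span (f ` B) = vs2.span (f ` S)"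
    using span_image B(3) by simp
  moreover have "card (f ` B) = card B"
    using card_image inj_on_subset[OF inj vs1.span_superset] by blast
  ultimately show ?thesis
    using vs2.dim_eq_card B(4) by simp
qed

end

interpretation V: vector_space vscale
  by unfold_locales (auto simp: vscale_def fun_eq_iff algebra_simps)

definition supported :: "nat set \<Rightarrow> (nat \<Rightarrow> real) set" where
  "supported S = {x. \<forall>i. i \<notin> S \<longrightarrow> x i = 0}"

lemma subspace_supported: "V.subspace (supported S)"
  unfolding V.subspace_def supported_def by (auto simp: vscale_def)

lemma span_subset_supported: "X \<subseteq> supported S \<Longrightarrow> V.span X \<subseteq> supported S"
  using V.span_minimal subspace_supported by blast

lemma supported_Int_supported: "S \<inter> R = {} \<Longrightarrow> supported S \<inter> supported R \<subseteq> {0}"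
  unfolding supported_def by (auto simp: fun_eq_iff) (metis disjoint_iff)

lemma unitv_supported: "i \<in> S \<Longrightarrow> unitv i \<in> supported S"
  by (auto simp: supported_def unitv_def)

lemma inj_unitv: "inj unitv"
  by (auto simp: inj_def unitv_def fun_eq_iff split: if_splits)

lemma independent_unitv: "finite S \<Longrightarrow> V.independent (unitv ` S)"
proof (induction S rule: finite_induct)
  case (insert i S)
  have "V.span (unitv ` S) \<subseteq> supported S"
    by (rule span_subset_supported) (auto intro: unitv_supported)
  moreover have "unitv i \<notin> supported S"
    using insert.hyps(2) by (auto simp: supported_def unitv_def)
  ultimately show ?case
    using V.independent_insertI[OF _ insert.IH] by auto
qed (simp add: V.independent_empty)

lemma dim_unitv: "finite S \<Longrightarrow> V.dim (unitv ` S) = card S"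
  using V.dim_eq_card_independent[OF independent_unitv] card_image[OF inj_on_subset[OF inj_unitv]]
  by simp

section \<open>Label arrangements\<close>

text \<open>A label Inl i stands for the hyperplane x_i = 0 and a label Inr (i, j, r) with i < j
  for x_i = r x_j.  For a finite set Q of nonzero rationals, chi_on Q S is the characteristic
  polynomial of the arrangement labels Q S on the coordinates in S.\<close>

type_synonym label = "nat + nat \<times> nat \<times> rat"

fun normal :: "label \<Rightarrow> nat \<Rightarrow> real" where
  "normal (Inl i) = unitv i"
| "normal (Inr (i, j, r)) = unitv i - vscale (real_of_rat r) (unitv j)"

definition labels :: "rat set \<Rightarrow> nat set \<Rightarrow> label set" where
  "labels Q S = Inl ` S \<union> Inr ` {(i, j, r). i \<in> S \<and> j \<in> S \<and> i < j \<and> r \<in> Q}"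

definition label_rank :: "label set \<Rightarrow> nat" where
  "label_rank K = V.dim (normal ` K)"

definition char_term :: "nat \<Rightarrow> label set \<Rightarrow> rat poly" where
  "char_term n K = (-1) ^ card K * monom 1 (n - label_rank K)"

definition adjacent :: "label set \<Rightarrow> nat \<Rightarrow> nat \<Rightarrow> bool" where
  "adjacent K i j \<longleftrightarrow> (\<exists>r. Inr (i, j, r) \<in> K \<or> Inr (j, i, r) \<in> K)"

definition component :: "label set \<Rightarrow> nat \<Rightarrow> nat set" where
  "component K v = {i. (adjacent K)\<^sup>*\<^sup>* v i}"

definition connected_from :: "label set \<Rightarrow> nat \<Rightarrow> nat set \<Rightarrow> bool" where
  "connected_from K v S \<longleftrightarrow> S \<subseteq> component K v"

definition chi_on :: "rat set \<Rightarrow> nat set \<Rightarrow> rat poly" where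
  "chi_on Q S = (\<Sum>K\<in>Pow (labels Q S). char_term (card S) K)"

definition chi_connected :: "rat set \<Rightarrow> nat \<Rightarrow> nat set \<Rightarrow> rat poly" where
  "chi_connected Q v S =
     (\<Sum>K\<in>{K. K \<subseteq> labels Q S \<and> connected_from K v S}. char_term (card S) K)"

lemma labels_Inl [simp]: "Inl i \<in> labels Q S \<longleftrightarrow> i \<in> S"
  unfolding labels_def by auto

lemma labels_Inr [simp]: "Inr (i, j, r) \<in> labels Q S \<longleftrightarrow> i \<in> S \<and> j \<in> S \<and> i < j \<and> r \<in> Q"
  unfolding labels_def by auto

lemma label_cases: obtains i where "x = Inl i" | i j r where "x = Inr (i, j, r)"
proof (cases x)
  case (Inr p)
  then show ?thesis using that by (cases p) auto
qed

lemma labels_empty [simp]: "labels Q {} = {}"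
  unfolding labels_def by auto

lemma labels_mono: "S \<subseteq> I \<Longrightarrow> labels Q S \<subseteq> labels Q I"
  unfolding labels_def by blast

lemma labels_disjoint: "S \<inter> R = {} \<Longrightarrow> labels Q S \<inter> labels Q R = {}"
  unfolding labels_def by blast

lemma finite_labels: "finite Q \<Longrightarrow> finite S \<Longrightarrow> finite (labels Q S)"
proof -
  assume "finite Q" "finite S"
  moreover have "{(i, j, r). i \<in> S \<and> j \<in> S \<and> i < j \<and> r \<in> Q} \<subseteq> S \<times> S \<times> Q"
    by auto
  ultimately show ?thesis
    unfolding labels_def by (simp add: finite_subset)
qed

lemma finite_subset_labels: "finite Q \<Longrightarrow> finite S \<Longrightarrow> K \<subseteq> labels Q S \<Longrightarrow> finite K"
  using finite_labels finite_subset by blast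

lemma normal_supported: "x \<in> labels Q S \<Longrightarrow> normal x \<in> supported S"
  by (cases x rule: label_cases) (auto simp: supported_def unitv_def vscale_def)

lemma normal_in_span_unitv:
  assumes "x \<in> labels Q S"
  shows "normal x \<in> V.span (unitv ` S)"
proof (cases x rule: label_cases)
  case (1 i)
  then show ?thesis using assms by (simp add: V.span_base)
next
  case (2 i j r)
  then have "unitv i \<in> V.span (unitv ` S)" "unitv j \<in> V.span (unitv ` S)"
    using assms by (simp_all add: V.span_base)
  then show ?thesis
    unfolding 2 normal.simps by (intro V.span_diff V.span_scale)
qed

lemma label_rank_le_card:
  assumes "finite S" "K \<subseteq> labels Q S"
  shows "label_rank K \<le> card S"
proof -
  have "normal ` K \<subseteq> V.span (unitv ` S)"
    using normal_in_span_unitv assms(2) by blast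
  then show ?thesis
    unfolding label_rank_def using V.dim_le_dim_if_subset_span[of "unitv ` S"] dim_unitv assms(1)
    by simp
qed

lemma label_rank_Un:
  assumes "finite Q" "finite S" "finite R" "S \<inter> R = {}" "K1 \<subseteq> labels Q S" "K2 \<subseteq> labels Q R"
  shows "label_rank (K1 \<union> K2) = label_rank K1 + label_rank K2"
proof -
  have "V.span (normal ` K1) \<subseteq> supported S"
    using normal_supported assms(5) by (intro span_subset_supported) blast
  moreover have "V.span (normal ` K2) \<subseteq> supported R"
    using normal_supported assms(6) by (intro span_subset_supported) blast
  ultimately have "V.span (normal ` K1) \<inter> V.span (normal ` K2) \<subseteq> {0}"
    using supported_Int_supported[OF assms(4)] by blast
  moreover have "finite (normal ` K1)" "finite (normal ` K2)"
    using finite_subset_labels[OF assms(1,2,5)] finite_subset_labels[OF assms(1,3,6)] by simp_all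
  ultimately show ?thesis
    unfolding label_rank_def image_Un using V.dim_Un_eq_add by blast
qed

lemma char_term_Un:
  assumes "finite Q" "finite S" "finite R" "S \<inter> R = {}" "K1 \<subseteq> labels Q S" "K2 \<subseteq> labels Q R"
  shows "char_term (card (S \<union> R)) (K1 \<union> K2) = char_term (card S) K1 * char_term (card R) K2"
proof -
  have "K1 \<inter> K2 = {}"
    using labels_disjoint[OF assms(4)] assms(5,6) by blast
  then have card: "card (K1 \<union> K2) = card K1 + card K2"
    using card_Un_disjoint[OF finite_subset_labels[OF assms(1,2,5)]
        finite_subset_labels[OF assms(1,3,6)]] by blast
  have "card (S \<union> R) - label_rank (K1 \<union> K2) = (card S - label_rank K1) + (card R - label_rank K2)"
    using card_Un_disjoint[OF assms(2-4)] label_rank_Un[OF assms]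
      label_rank_le_card[OF assms(2,5)] label_rank_le_card[OF assms(3,6)] by simp
  then show ?thesis
    unfolding char_term_def card power_add
    using mult_monom[of "1::rat" "card S - label_rank K1" 1 "card R - label_rank K2"] by (simp
      add: algebra_simps)
qed

lemma unitv_in_span_if_reachable:
  assumes "\<forall>r\<in>Q. r \<noteq> 0" "K \<subseteq> labels Q S" "(adjacent K)\<^sup>*\<^sup>* v i"
  shows "unitv i \<in> V.span (insert (unitv v) (normal ` K))"
  using assms(3)
proof (induction rule: rtranclp_induct)
  case base
  then show ?case by (simp add: V.span_base)
next
  case (step y z)
  let ?W = "insert (unitv v) (normal ` K)"
  from step.hyps(2) obtain r where "Inr (y, z, r) \<in> K \<or> Inr (z, y, r) \<in> K"
    unfolding adjacent_def by blast
  then show ?case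
  proof
    assume yz: "Inr (y, z, r) \<in> K"
    then have "real_of_rat r \<noteq> 0"
      using assms(1,2) by fastforce
    then have "unitv z = vscale (inverse (real_of_rat r)) (unitv y - normal (Inr (y, z, r)))"
      by (auto simp: fun_eq_iff vscale_def unitv_def)
    also have "\<dots> \<in> V.span ?W"
      by (intro V.span_scale V.span_diff step.IH V.span_base insertI2 imageI yz)
    finally show ?thesis .
  next
    assume zy: "Inr (z, y, r) \<in> K"
    have "unitv z = normal (Inr (z, y, r)) + vscale (real_of_rat r) (unitv y)"
      by (auto simp: fun_eq_iff vscale_def unitv_def)
    also have "\<dots> \<in> V.span ?W"
      by (intro V.span_scale V.span_add step.IH V.span_base insertI2 imageI zy)
    finally show ?thesis .
  qed
qed

lemma label_rank_connected:
  assumes "\<forall>r\<in>Q. r \<noteq> 0" "finite Q" "finite S" "v \<in> S"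
    "K \<subseteq> labels Q S" "connected_from K v S"
  shows "label_rank K = (if unitv v \<in> V.span (normal ` K) then card S else card S - 1)"
    and "card S \<le> Suc (label_rank K)"
proof -
  let ?X = "normal ` K"
  have fin: "finite ?X"
    using finite_subset_labels assms(2,3,5) by blast
  have "unitv ` S \<subseteq> V.span (insert (unitv v) ?X)"
    using unitv_in_span_if_reachable[OF assms(1,5)] assms(6)
    unfolding connected_from_def component_def by blast
  then have ge: "card S \<le> V.dim (insert (unitv v) ?X)"
    using V.dim_le_dim_if_subset_span[of "insert (unitv v) ?X" "unitv ` S"] dim_unitv[OF assms(3)]
      fin by simp
  have "unitv v \<in> V.span (unitv ` S)"
    using assms(4) by (simp add: V.span_base)
  then have "insert (unitv v) ?X \<subseteq> V.span (unitv ` S)"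
    using normal_in_span_unitv assms(5) by blast
  then have le: "V.dim (insert (unitv v) ?X) \<le> card S"
    using V.dim_le_dim_if_subset_span[of "unitv ` S" "insert (unitv v) ?X"] dim_unitv[OF assms(3)]
      assms(3) by simp
  show "label_rank K = (if unitv v \<in> V.span ?X then card S else card S - 1)"
    using V.dim_insert_span V.dim_insert_not_in_span[OF fin] ge le unfolding label_rank_def
    by (cases "unitv v \<in> V.span ?X") auto
  show "card S \<le> Suc (label_rank K)"
    using ge V.dim_insert_le[OF fin, of "unitv v"] unfolding label_rank_def by linarith
qed

section \<open>Splitting off the component of a vertex\<close>

lemma Inr_in_subset_labels:
  "K \<subseteq> labels Q S \<Longrightarrow> Inr (i, j, r) \<in> K \<Longrightarrow> i \<in> S \<and> j \<in> S \<and> i < j \<and> r \<in> Q"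
  by (drule (1) subsetD) simp

lemma adjacent_mono: "K \<subseteq> K' \<Longrightarrow> adjacent K i j \<Longrightarrow> adjacent K' i j"
  unfolding adjacent_def by blast

lemma adjacent_in_labels: "K \<subseteq> labels Q S \<Longrightarrow> adjacent K i j \<Longrightarrow> i \<in> S \<and> j \<in> S"
  unfolding adjacent_def using Inr_in_subset_labels by blast

lemma adjacent_sym: "adjacent K i j \<longleftrightarrow> adjacent K j i"
  unfolding adjacent_def by blast

lemma start_in_component: "v \<in> component K v"
  unfolding component_def by simp

lemma component_subset:
  assumes "K \<subseteq> labels Q S" "v \<in> S"
  shows "component K v \<subseteq> S"
proof
  fix i assume "i \<in> component K v"
  then have "(adjacent K)\<^sup>*\<^sup>* v i"
    unfolding component_def by simp
  then show "i \<in> S"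
  proof (induction rule: rtranclp_induct)
    case (step y z)
    then show ?case using adjacent_in_labels[OF assms(1)] by blast
  qed (rule assms(2))
qed

lemma component_mono:
  assumes "K \<subseteq> K'"
  shows "component K v \<subseteq> component K' v"
  using mono_rtranclp[of "adjacent K" "adjacent K'"] adjacent_mono[OF assms]
  unfolding component_def by blast

lemma adjacent_component:
  "adjacent K i j \<Longrightarrow> i \<in> component K v \<longleftrightarrow> j \<in> component K v"
  unfolding component_def by (metis adjacent_sym mem_Collect_eq rtranclp.rtrancl_into_rtrancl)

lemma component_restrict:
  assumes "K \<subseteq> labels Q I"
  shows "connected_from (K \<inter> labels Q (component K v)) v (component K v)"
  unfolding connected_from_def
proof
  fix i assume "i \<in> component K v"
  then have "(adjacent K)\<^sup>*\<^sup>* v i"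
    unfolding component_def by simp
  then have "(adjacent (K \<inter> labels Q (component K v)))\<^sup>*\<^sup>* v i"
  proof (induction rule: rtranclp_induct)
    case (step y z)
    then have "y \<in> component K v" "z \<in> component K v"
      unfolding component_def by auto
    moreover obtain r where "Inr (y, z, r) \<in> K \<or> Inr (z, y, r) \<in> K"
      using step.hyps(2) unfolding adjacent_def by blast
    ultimately have "adjacent (K \<inter> labels Q (component K v)) y z"
      unfolding adjacent_def by (auto dest: Inr_in_subset_labels[OF assms])
    then show ?case
      using step.IH by simp
  qed simp
  then show "i \<in> component (K \<inter> labels Q (component K v)) v"
    unfolding component_def by simp
qed

lemma component_Un_disjoint:
  assumes "K1 \<subseteq> labels Q S" "K2 \<subseteq> labels Q R" "S \<inter> R = {}" "v \<in> S"
  shows "component (K1 \<union> K2) v = component K1 v"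
proof
  show "component K1 v \<subseteq> component (K1 \<union> K2) v"
    by (rule component_mono) simp
  show "component (K1 \<union> K2) v \<subseteq> component K1 v"
  proof
    fix i assume "i \<in> component (K1 \<union> K2) v"
    then have "(adjacent (K1 \<union> K2))\<^sup>*\<^sup>* v i"
      unfolding component_def by simp
    then have "(adjacent K1)\<^sup>*\<^sup>* v i \<and> i \<in> S"
    proof (induction rule: rtranclp_induct)
      case (step y z)
      obtain r where "Inr (y, z, r) \<in> K1 \<union> K2 \<or> Inr (z, y, r) \<in> K1 \<union> K2"
        using step.hyps(2) unfolding adjacent_def by blast
      moreover have "Inr (y, z, r) \<notin> K2" "Inr (z, y, r) \<notin> K2"
        using step.IH assms(3) by (auto dest: Inr_in_subset_labels[OF assms(2)])
      ultimately have "Inr (y, z, r) \<in> K1 \<or> Inr (z, y, r) \<in> K1"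
        by blast
      then have "adjacent K1 y z" "z \<in> S"
        using assms(1) unfolding adjacent_def by auto
      then show ?case
        using step.IH rtranclp.rtrancl_into_rtrancl[of "adjacent K1" v y z] by blast
    qed (simp add: assms(4))
    then show "i \<in> component K1 v"
      unfolding component_def by simp
  qed
qed

lemma labels_split_component:
  assumes "K \<subseteq> labels Q I" "component K v = S"
  shows "K = (K \<inter> labels Q S) \<union> (K \<inter> labels Q (I - S))"
proof (intro equalityI subsetI)
  fix x assume x: "x \<in> K"
  show "x \<in> (K \<inter> labels Q S) \<union> (K \<inter> labels Q (I - S))"
  proof (cases x rule: label_cases)
    case (1 i)
    then have "i \<in> I"
      using x assms(1) labels_Inl[of i Q I] by blast
    then show ?thesis
      using x 1 by simp
  next
    case (2 i j r)
    then have "i \<in> I" "j \<in> I" "i < j" "r \<in> Q"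
      using Inr_in_subset_labels[OF assms(1)] x by blast+
    moreover have "i \<in> S \<longleftrightarrow> j \<in> S"
      using adjacent_component[of K i j v] x 2 assms(2) unfolding adjacent_def by blast
    ultimately show ?thesis
      using x 2 by (cases "i \<in> S") simp_all
  qed
qed blast

lemma bij_betw_Un_component:
  assumes "S \<subseteq> I" "v \<in> S"
  shows "bij_betw (\<lambda>(K1, K2). K1 \<union> K2)
           ({K. K \<subseteq> labels Q S \<and> connected_from K v S} \<times> Pow (labels Q (I - S)))
           {K. K \<subseteq> labels Q I \<and> component K v = S}"
proof (rule bij_betwI')
  have disj: "labels Q S \<inter> labels Q (I - S) = {}"
    by (rule labels_disjoint) blast
  fix X Y
  assume "X \<in> {K. K \<subseteq> labels Q S \<and> connected_from K v S} \<times> Pow (labels Q (I - S))"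
    and "Y \<in> {K. K \<subseteq> labels Q S \<and> connected_from K v S} \<times> Pow (labels Q (I - S))"
  then obtain K1 K2 L1 L2 where XY: "X = (K1, K2)" "Y = (L1, L2)" "K1 \<subseteq> labels Q S"
      "L1 \<subseteq> labels Q S" "K2 \<subseteq> labels Q (I - S)" "L2 \<subseteq> labels Q (I - S)"
    by (cases X, cases Y) (simp_all add: mem_Times_iff)
  then have "K1 = L1 \<and> K2 = L2" if "K1 \<union> K2 = L1 \<union> L2"
    using that disj by blast
  then show "((case X of (K1, K2) \<Rightarrow> K1 \<union> K2) = (case Y of (K1, K2) \<Rightarrow> K1 \<union> K2)) = (X = Y)"
    using XY(1,2) by auto
next
  fix X
  assume "X \<in> {K. K \<subseteq> labels Q S \<and> connected_from K v S} \<times> Pow (labels Q (I - S))"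
  then obtain K1 K2 where X: "X = (K1, K2)" "K1 \<subseteq> labels Q S" "connected_from K1 v S"
      "K2 \<subseteq> labels Q (I - S)"
    by auto
  have "component (K1 \<union> K2) v = component K1 v"
    using component_Un_disjoint[OF X(2,4) _ assms(2)] by blast
  also have "\<dots> = S"
    using X(2,3) component_subset assms(2) unfolding connected_from_def by blast
  finally show "(case X of (K1, K2) \<Rightarrow> K1 \<union> K2) \<in> {K. K \<subseteq> labels Q I \<and> component K v = S}"
    using X labels_mono[OF assms(1)] labels_mono[of "I - S" I Q] by auto
next
  fix K assume "K \<in> {K. K \<subseteq> labels Q I \<and> component K v = S}"
  then have K: "K \<subseteq> labels Q I" "component K v = S"
    by auto
  have split: "K = (K \<inter> labels Q S) \<union> (K \<inter> labels Q (I - S))"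
    by (rule labels_split_component[OF K])
  have "connected_from (K \<inter> labels Q S) v S"
    using component_restrict[OF K(1), of v] K(2) by simp
  then have "(K \<inter> labels Q S, K \<inter> labels Q (I - S))
      \<in> {K. K \<subseteq> labels Q S \<and> connected_from K v S} \<times> Pow (labels Q (I - S))"
    by blast
  moreover have "K = (case (K \<inter> labels Q S, K \<inter> labels Q (I - S)) of (K1, K2) \<Rightarrow> K1 \<union> K2)"
    unfolding prod.case by (rule split)
  ultimately show "\<exists>X\<in>{K. K \<subseteq> labels Q S \<and> connected_from K v S} \<times> Pow (labels Q (I - S)).
      K = (case X of (K1, K2) \<Rightarrow> K1 \<union> K2)"
    by (rule bexI[rotated])
qed

lemma chi_on_decompose:
  assumes "finite Q" "finite I" "v \<in> I"
  shows "chi_on Q I = (\<Sum>S | v \<in> S \<and> S \<subseteq> I. chi_connected Q v S * chi_on Q (I - S))"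
proof -
  have fin: "finite {S. v \<in> S \<and> S \<subseteq> I}"
    using assms(2) by (rule rev_finite_subset[OF finite_Pow_iff[THEN iffD2]]) auto
  have img: "(\<lambda>K. component K v) ` Pow (labels Q I) \<subseteq> {S. v \<in> S \<and> S \<subseteq> I}"
    using component_subset[of _ Q I v] assms(3) start_in_component[of v] by auto
  have "chi_on Q I =
      (\<Sum>S | v \<in> S \<and> S \<subseteq> I. \<Sum>K | K \<subseteq> labels Q I \<and> component K v = S. char_term (card I) K)"
    unfolding chi_on_def
    using sum.group[OF finite_Pow_iff[THEN iffD2, OF finite_labels[OF assms(1,2)]] fin img,
        of "char_term (card I)"]
    by (simp only: Pow_iff)
  also have "\<dots> = (\<Sum>S | v \<in> S \<and> S \<subseteq> I. chi_connected Q v S * chi_on Q (I - S))"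
  proof (rule sum.cong[OF refl])
    fix S assume "S \<in> {S. v \<in> S \<and> S \<subseteq> I}"
    then have "v \<in> S" "S \<subseteq> I"
      by auto
    then have S: "v \<in> S" "S \<subseteq> I" "finite S" "finite (I - S)"
      using rev_finite_subset[OF assms(2)] assms(2) by auto
    have "chi_connected Q v S * chi_on Q (I - S) =
        (\<Sum>(K1, K2)\<in>{K. K \<subseteq> labels Q S \<and> connected_from K v S} \<times> Pow (labels Q (I - S)).
          char_term (card S) K1 * char_term (card (I - S)) K2)"
      unfolding chi_connected_def chi_on_def sum_product sum.cartesian_product ..
    also have "\<dots> = (\<Sum>(K1, K2)\<in>{K. K \<subseteq> labels Q S \<and> connected_from K v S} \<times> Pow (labels Q (I - S)).
          char_term (card I) (K1 \<union> K2))"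
    proof (rule sum.cong[OF refl], clarify)
      fix K1 K2 assume "K1 \<subseteq> labels Q S" "K2 \<subseteq> labels Q (I - S)"
      then show "char_term (card S) K1 * char_term (card (I - S)) K2 = char_term (card I) (K1 \<union> K2)"
        using char_term_Un[OF assms(1) S(3,4) _ \<open>K1 \<subseteq> labels Q S\<close>] S(2)
        by (simp add: Un_absorb1)
    qed
    also have "\<dots> = (\<Sum>K | K \<subseteq> labels Q I \<and> component K v = S. char_term (card I) K)"
      using sum.reindex_bij_betw[OF bij_betw_Un_component[OF S(2,1)], of "char_term (card I)"]
      by (simp add: case_prod_unfold)
    finally show "(\<Sum>K | K \<subseteq> labels Q I \<and> component K v = S. char_term (card I) K) =
        chi_connected Q v S * chi_on Q (I - S)" ..
  qed
  finally show ?thesis .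
qed

section \<open>Order-preserving relabelling\<close>

fun relabel :: "(nat \<Rightarrow> nat) \<Rightarrow> label \<Rightarrow> label" where
  "relabel g (Inl i) = Inl (g i)"
| "relabel g (Inr (i, j, r)) = Inr (g i, g j, r)"

lemma adjacent_relabelI: "adjacent K i j \<Longrightarrow> adjacent (relabel g ` K) (g i) (g j)"
  unfolding adjacent_def by (metis image_eqI relabel.simps(2))

locale enumeration =
  fixes k :: nat and g :: "nat \<Rightarrow> nat" and S :: "nat set"
  assumes mono: "strict_mono_on {..<k} g" and image: "g ` {..<k} = S"
begin

lemma less_iff: "i < k \<Longrightarrow> j < k \<Longrightarrow> g i < g j \<longleftrightarrow> i < j"
  using strict_mono_on_less[OF mono] by simp

lemma eq_iff: "i < k \<Longrightarrow> j < k \<Longrightarrow> g i = g j \<longleftrightarrow> i = j"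
  using strict_mono_on_eq[OF mono] by simp

lemma card_eq: "card S = k"
  using card_image[OF strict_mono_on_imp_inj_on[OF mono]] image by simp

lemma relabel_labels: "relabel g ` labels Q {..<k} = labels Q S"
proof (intro equalityI subsetI)
  fix y assume "y \<in> relabel g ` labels Q {..<k}"
  then obtain x where "x \<in> labels Q {..<k}" "y = relabel g x"
    by blast
  then show "y \<in> labels Q S"
    using image less_iff by (cases x rule: label_cases) auto
next
  fix y assume y: "y \<in> labels Q S"
  show "y \<in> relabel g ` labels Q {..<k}"
  proof (cases y rule: label_cases)
    case (1 m)
    then obtain i where "i < k" "m = g i"
      using y image by auto
    then show ?thesis
      using 1 by (auto intro!: image_eqI[of _ _ "Inl i"])
  next
    case (2 m1 m2 r)
    then obtain i j where ij: "i < k" "j < k" "m1 = g i" "m2 = g j"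
      using y image by auto
    then show ?thesis
      using 2 y less_iff by (auto intro!: image_eqI[of _ _ "Inr (i, j, r)"])
  qed
qed

lemma inj_on_relabel: "inj_on (relabel g) (labels Q {..<k})"
proof (rule inj_onI)
  fix x y assume "x \<in> labels Q {..<k}" "y \<in> labels Q {..<k}" "relabel g x = relabel g y"
  then show "x = y"
    using eq_iff by (cases x rule: label_cases; cases y rule: label_cases) auto
qed

definition pull :: "(nat \<Rightarrow> real) \<Rightarrow> nat \<Rightarrow> real" where
  "pull y = (\<lambda>i. if i < k then y (g i) else 0)"

lemma linear_pull: "Vector_Spaces.linear vscale vscale pull"
  unfolding Vector_Spaces.linear_iff using V.vector_space_axioms
  by (auto simp: pull_def fun_eq_iff vscale_def)

lemma pull_normal: "x \<in> labels Q {..<k} \<Longrightarrow> pull (normal (relabel g x)) = normal x"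
  using eq_iff by (cases x rule: label_cases) (auto simp: pull_def fun_eq_iff vscale_def unitv_def)

lemma inj_on_pull: "inj_on pull (supported S)"
proof -
  interpret pull: Vector_Spaces.linear vscale vscale pull
    by (rule linear_pull)
  have "y = 0" if "pull y = 0" "y \<in> supported S" for y
  proof -
    have "y m = 0" for m
    proof (cases "m \<in> S")
      case True
      then obtain i where "i < k" "m = g i"
        using image by auto
      then show ?thesis
        using fun_cong[OF that(1), of i] by (simp add: pull_def)
    next
      case False
      then show ?thesis
        using that(2) unfolding supported_def by simp
    qed
    then show "y = 0"
      by (simp add: fun_eq_iff)
  qed
  then show ?thesis
    using subspace_supported[of S] unfolding inj_on_def
    by (metis pull.diff V.subspace_diff eq_iff_diff_eq_0)
qed

lemma label_rank_relabel:
  assumes "finite Q" "K \<subseteq> labels Q {..<k}"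
  shows "label_rank (relabel g ` K) = label_rank K"
proof -
  have sub: "relabel g ` K \<subseteq> labels Q S"
    using assms(2) relabel_labels by blast
  have "V.span (normal ` relabel g ` K) \<subseteq> supported S"
    using normal_supported sub by (intro span_subset_supported) blast
  then have inj: "inj_on pull (V.span (normal ` relabel g ` K))"
    using inj_on_pull inj_on_subset by blast
  have fin: "finite (normal ` relabel g ` K)"
    using finite_subset_labels[OF assms(1) _ sub] image by blast
  interpret pull: Vector_Spaces.linear vscale vscale pull
    by (rule linear_pull)
  have "pull ` normal ` relabel g ` K = normal ` K"
    using pull_normal assms(2) by (force simp: image_image)
  then show ?thesis
    unfolding label_rank_def using pull.dim_image_eq_if_inj_on_span[OF fin inj] by simp
qed

lemma adjacent_relabel:
  assumes "K \<subseteq> labels Q {..<k}" "i < k"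
  shows "adjacent (relabel g ` K) (g i) m \<longleftrightarrow> (\<exists>j<k. m = g j \<and> adjacent K i j)"
proof
  assume "adjacent (relabel g ` K) (g i) m"
  then obtain r where "Inr (g i, m, r) \<in> relabel g ` K \<or> Inr (m, g i, r) \<in> relabel g ` K"
    unfolding adjacent_def by blast
  then obtain x where x: "x \<in> K" "Inr (g i, m, r) = relabel g x \<or> Inr (m, g i, r) = relabel g x"
    unfolding image_iff by blast
  show "\<exists>j<k. m = g j \<and> adjacent K i j"
  proof (cases x rule: label_cases)
    case (1 l)
    then show ?thesis using x(2) by simp
  next
    case (2 a b r')
    then have "a < k" "b < k"
      using Inr_in_subset_labels[OF assms(1)] x(1) by blast+
    from x(2) consider "g a = g i" "m = g b" "r' = r" | "m = g a" "g b = g i" "r' = r"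
      unfolding 2 by auto
    then show ?thesis
    proof cases
      case 1
      then have "a = i"
        using eq_iff \<open>a < k\<close> assms(2) by blast
      then show ?thesis
        using x(1) 1 \<open>b < k\<close> unfolding 2 adjacent_def by blast
    next
      case 2
      then have "b = i"
        using eq_iff \<open>b < k\<close> assms(2) by blast
      then show ?thesis
        using x(1) 2 \<open>a < k\<close> unfolding \<open>x = Inr (a, b, r')\<close> adjacent_def by blast
    qed
  qed
next
  assume "\<exists>j<k. m = g j \<and> adjacent K i j"
  then show "adjacent (relabel g ` K) (g i) m"
    using adjacent_relabelI by blast
qed

lemma component_relabel:
  assumes "K \<subseteq> labels Q {..<k}" "v < k"
  shows "component (relabel g ` K) (g v) = g ` component K v"
proof (intro equalityI subsetI)
  fix m assume "m \<in> component (relabel g ` K) (g v)"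
  then have "(adjacent (relabel g ` K))\<^sup>*\<^sup>* (g v) m"
    unfolding component_def by simp
  then have "\<exists>i<k. m = g i \<and> (adjacent K)\<^sup>*\<^sup>* v i"
  proof (induction rule: rtranclp_induct)
    case (step y z)
    then obtain i where "i < k" "y = g i" "(adjacent K)\<^sup>*\<^sup>* v i"
      by blast
    moreover from this(2) have "adjacent (relabel g ` K) (g i) z"
      using step.hyps(2) by simp
    ultimately obtain j where "j < k" "z = g j" "adjacent K i j"
      using adjacent_relabel[OF assms(1)] by blast
    then show ?case
      using rtranclp.rtrancl_into_rtrancl[OF \<open>(adjacent K)\<^sup>*\<^sup>* v i\<close>] by blast
  qed (use assms(2) in blast)
  then show "m \<in> g ` component K v"
    unfolding component_def by blast
next
  fix m assume "m \<in> g ` component K v"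
  then obtain i where "m = g i" "(adjacent K)\<^sup>*\<^sup>* v i"
    unfolding component_def by blast
  moreover have "(adjacent (relabel g ` K))\<^sup>*\<^sup>* (g v) (g i)" if "(adjacent K)\<^sup>*\<^sup>* v i" for i
    using that
  proof (induction rule: rtranclp_induct)
    case (step y z)
    with adjacent_relabelI show ?case
      by (metis rtranclp.rtrancl_into_rtrancl)
  qed simp
  ultimately show "m \<in> component (relabel g ` K) (g v)"
    unfolding component_def by blast
qed

lemma connected_from_relabel:
  assumes "K \<subseteq> labels Q {..<k}" "v < k"
  shows "connected_from (relabel g ` K) (g v) S \<longleftrightarrow> connected_from K v {..<k}"
proof -
  have "component K v \<subseteq> {..<k}"
    using component_subset assms by blast
  then have "g ` {..<k} \<subseteq> g ` component K v \<longleftrightarrow> {..<k} \<subseteq> component K v"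
    using inj_on_image_subset_iff[OF strict_mono_on_imp_inj_on[OF mono]] by blast
  then show ?thesis
    unfolding connected_from_def component_relabel[OF assms] image by blast
qed

lemma sum_char_term_relabel:
  assumes "finite Q" "F \<subseteq> Pow (labels Q {..<k})"
  shows "(\<Sum>K\<in>image (relabel g) ` F. char_term (card S) K) = (\<Sum>K\<in>F. char_term k K)"
proof -
  have inj: "inj_on (image (relabel g)) F"
    using inj_on_subset[OF inj_on_image_Pow[OF inj_on_relabel] assms(2)] .
  have "char_term (card S) (relabel g ` K) = char_term k K" if "K \<in> F" for K
  proof -
    have "K \<subseteq> labels Q {..<k}"
      using that assms(2) by blast
    moreover have "card (relabel g ` K) = card K"
      using card_image inj_on_subset[OF inj_on_relabel] calculation by blast
    ultimately show ?thesis
      unfolding char_term_def card_eq using label_rank_relabel[OF assms(1)] by simp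
  qed
  then show ?thesis
    by (simp add: sum.reindex[OF inj])
qed

lemma chi_on_relabel: "finite Q \<Longrightarrow> chi_on Q S = chi_on Q {..<k}"
  unfolding chi_on_def image_Pow_surj[OF relabel_labels, symmetric]
  using sum_char_term_relabel[of Q "Pow (labels Q {..<k})"] by simp

lemma chi_connected_relabel:
  assumes "finite Q" "v < k"
  shows "chi_connected Q (g v) S = chi_connected Q v {..<k}"
proof -
  let ?F = "{K. K \<subseteq> labels Q {..<k} \<and> connected_from K v {..<k}}"
  have "{K. K \<subseteq> labels Q S \<and> connected_from K (g v) S} = image (relabel g) ` ?F"
  proof (intro equalityI subsetI)
    fix K' assume K': "K' \<in> {K. K \<subseteq> labels Q S \<and> connected_from K (g v) S}"
    then have "K' \<subseteq> relabel g ` labels Q {..<k}"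
      using relabel_labels by simp
    then obtain K where "K \<subseteq> labels Q {..<k}" "K' = relabel g ` K"
      by (auto simp: subset_image_iff)
    then show "K' \<in> image (relabel g) ` ?F"
      using connected_from_relabel[OF _ assms(2)] K' by blast
  next
    fix K' assume "K' \<in> image (relabel g) ` ?F"
    then show "K' \<in> {K. K \<subseteq> labels Q S \<and> connected_from K (g v) S}"
      using connected_from_relabel[OF _ assms(2)] relabel_labels by blast
  qed
  then show ?thesis
    unfolding chi_connected_def using sum_char_term_relabel[OF assms(1), of ?F] by auto
qed

end

lemma obtain_enumeration:
  assumes "finite S"
  obtains g where "enumeration (card S) g S"
proof
  let ?xs = "sorted_list_of_set S"
  show "enumeration (card S) ((!) ?xs) S"
  proof
    show "strict_mono_on {..<card S} ((!) ?xs)"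
      using strict_sorted_list_of_set[of S]
      by (intro strict_mono_onI) (simp add: sorted_wrt_iff_nth_less)
    show "(!) ?xs ` {..<card S} = S"
      using assms set_conv_nth[of ?xs] by auto
  qed
qed

lemma chi_on_eq_lessThan:
  assumes "finite Q" "finite S"
  shows "chi_on Q S = chi_on Q {..<card S}"
proof -
  obtain g where "enumeration (card S) g S"
    using obtain_enumeration[OF assms(2)] .
  then show ?thesis
    using enumeration.chi_on_relabel[OF _ assms(1)] by blast
qed

lemma chi_connected_eq_lessThan:
  assumes "finite Q" "finite S" "m \<in> S" "\<forall>i\<in>S. i \<le> m"
  shows "chi_connected Q m S = chi_connected Q (card S - 1) {..<card S}"
proof -
  obtain g where g: "enumeration (card S) g S"
    using obtain_enumeration[OF assms(2)] .
  interpret enumeration "card S" g S by (fact g)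
  obtain j where j: "j < card S" "m = g j"
    using image assms(3) by auto
  have "j = card S - 1"
  proof (rule ccontr)
    assume "j \<noteq> card S - 1"
    then have "g j < g (card S - 1)"
      using j less_iff by simp
    moreover have "g (card S - 1) \<in> S"
      using image j by auto
    ultimately show False
      using assms(4) j by fastforce
  qed
  then show ?thesis
    using chi_connected_relabel[OF assms(1)] j by simp
qed

section \<open>The exponential formula\<close>

definition chi :: "rat set \<Rightarrow> nat \<Rightarrow> rat poly" where
  "chi Q n = chi_on Q {..<n}"

definition phi :: "rat set \<Rightarrow> nat \<Rightarrow> rat poly" where
  "phi Q k = chi_connected Q (k - 1) {..<k}"

lemma sum_Pow_card:
  fixes h :: "nat \<Rightarrow> 'a::comm_semiring_1"
  assumes "finite A"
  shows "(\<Sum>T\<in>Pow A. h (card T)) = (\<Sum>j\<le>card A. of_nat (card A choose j) * h j)"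
proof -
  have "card ` Pow A \<subseteq> {..card A}"
    using assms by (auto intro: card_mono)
  then show ?thesis
    using sum.group[OF finite_Pow_iff[THEN iffD2, OF assms] finite_atMost[of "card A"],
        where g = card and h = "\<lambda>T. h (card T)"]
    by (simp add: n_subsets[OF assms])
qed

lemma chi_Suc:
  assumes "finite Q"
  shows "chi Q (Suc n) = (\<Sum>j\<le>n. of_nat (n choose j) * (phi Q (Suc j) * chi Q (n - j)))"
proof -
  let ?I = "{..<Suc n}"
  have "chi Q (Suc n) = (\<Sum>S | n \<in> S \<and> S \<subseteq> ?I. chi_connected Q n S * chi_on Q (?I - S))"
    unfolding chi_def using chi_on_decompose[OF assms, of ?I n] by simp
  also have "\<dots> = (\<Sum>S | n \<in> S \<and> S \<subseteq> ?I. phi Q (card S) * chi Q (Suc n - card S))"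
  proof (rule sum.cong[OF refl])
    fix S assume S: "S \<in> {S. n \<in> S \<and> S \<subseteq> ?I}"
    then have fin: "finite S"
      using finite_subset by blast
    have "chi_connected Q n S = phi Q (card S)"
      unfolding phi_def using S by (intro chi_connected_eq_lessThan[OF assms fin]) auto
    moreover have "chi_on Q (?I - S) = chi Q (Suc n - card S)"
      unfolding chi_def using chi_on_eq_lessThan[OF assms, of "?I - S"] S card_Diff_subset[OF fin]
      by simp
    ultimately show "chi_connected Q n S * chi_on Q (?I - S) =
        phi Q (card S) * chi Q (Suc n - card S)"
      by simp
  qed
  also have "\<dots> = (\<Sum>T\<in>Pow {..<n}. phi Q (Suc (card T)) * chi Q (n - card T))"
  proof -
    have bij: "bij_betw (insert n) (Pow {..<n}) {S. n \<in> S \<and> S \<subseteq> ?I}"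
      by (rule bij_betwI[where g = "\<lambda>S. S - {n}"]) auto
    have "card (insert n T) = Suc (card T)" if "T \<in> Pow {..<n}" for T
      using that finite_subset[of T "{..<n}"] by (auto simp: card_insert_if)
    then show ?thesis
      using sum.reindex_bij_betw[OF bij, of "\<lambda>S. phi Q (card S) * chi Q (Suc n - card S)"]
      by simp
  qed
  also have "\<dots> = (\<Sum>j\<le>n. of_nat (n choose j) * (phi Q (Suc j) * chi Q (n - j)))"
    using sum_Pow_card[of "{..<n}" "\<lambda>j. phi Q (Suc j) * chi Q (n - j)"] by simp
  finally show ?thesis .
qed

lemma chi_zero: "chi Q 0 = 1"
  unfolding chi_def chi_on_def char_term_def label_rank_def by simp

lemma poly_chi_one:
  assumes "finite Q" "n > 0"
  shows "poly (chi Q n) 1 = 0"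
proof -
  have fin: "finite (labels Q {..<n})"
    using finite_labels[OF assms(1)] by simp
  have "labels Q {..<n} \<noteq> {}"
    using labels_Inl[of 0 Q "{..<n}"] assms(2) by blast
  then have "card (labels Q {..<n}) > 0"
    using fin by (simp add: card_gt_0_iff)
  then have "(\<Sum>K\<in>Pow (labels Q {..<n}). (-1) ^ card K) = (0::rat)"
    using prod_diff_conv_sum[OF fin, of "\<lambda>_. 1::rat" "\<lambda>_. 1"] by (simp add: power_0_left)
  then show ?thesis
    unfolding chi_def chi_on_def char_term_def poly_sum by (simp add: poly_monom)
qed

lemma poly_phi_one:
  assumes "finite Q"
  shows "poly (phi Q (Suc n)) 1 = 0"
proof -
  have "0 = poly (chi Q (Suc n)) 1"
    using poly_chi_one[OF assms] by simp
  also have "\<dots> = (\<Sum>j\<le>n. of_nat (n choose j) * (poly (phi Q (Suc j)) 1 * poly (chi Q (n - j)) 1))"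
    unfolding chi_Suc[OF assms] poly_sum poly_mult by (simp add: of_nat_poly)
  also have "\<dots> = (\<Sum>j<n. of_nat (n choose j) * (poly (phi Q (Suc j)) 1 * poly (chi Q (n - j)) 1))
      + poly (phi Q (Suc n)) 1"
    by (simp add: lessThan_Suc_atMost[symmetric] chi_zero)
  also have "(\<Sum>j<n. of_nat (n choose j) * (poly (phi Q (Suc j)) 1 * poly (chi Q (n - j)) 1)) = 0"
    using poly_chi_one[OF assms] by (intro sum.neutral) simp
  finally show ?thesis by simp
qed

definition connected_label_sets :: "rat set \<Rightarrow> nat \<Rightarrow> label set set" where
  "connected_label_sets Q k = {K. K \<subseteq> labels Q {..<k} \<and> connected_from K (k - 1) {..<k}}"

definition beta :: "rat set \<Rightarrow> nat \<Rightarrow> int" where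
  "beta Q k = (\<Sum>K | K \<in> connected_label_sets Q k \<and> label_rank K \<noteq> k. (-1) ^ card K)"

lemma finite_connected_label_sets: "finite Q \<Longrightarrow> finite (connected_label_sets Q k)"
  unfolding connected_label_sets_def
  using finite_labels[OF _ finite_lessThan] by (auto intro: rev_finite_subset[of "Pow _"])

lemma sum_pCons: "(\<Sum>x\<in>A. pCons (f x) (g x)) = pCons (\<Sum>x\<in>A. f x) (\<Sum>x\<in>A. g x)"
  by (induction A rule: infinite_finite_induct) simp_all

lemma neg_one_power_poly: "(-1 :: 'a::comm_ring_1 poly) ^ n = [:(-1) ^ n:]"
  by (induction n) (simp_all add: one_pCons)

text \<open>A connected label set on k vertices has rank k or k - 1, so phi Q k has degree at most 1;
  its linear coefficient is beta Q k.\<close>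

lemma phi_eq_pCons:
  assumes "\<forall>r\<in>Q. r \<noteq> 0" "finite Q" "k > 0"
  shows "\<exists>c. phi Q k = [:c, of_int (beta Q k):]"
proof -
  let ?C = "connected_label_sets Q k"
  have fin: "finite ?C"
    by (rule finite_connected_label_sets[OF assms(2)])
  have "char_term k K = pCons (if label_rank K = k then (-1) ^ card K else 0)
      [:if label_rank K \<noteq> k then (-1) ^ card K else 0:]" if "K \<in> ?C" for K
  proof -
    have "k \<le> Suc (label_rank K)" "label_rank K \<le> k"
      using that assms label_rank_connected(2)[of Q "{..<k}" "k - 1" K]
        label_rank_le_card[of "{..<k}" K Q] by (auto simp: connected_label_sets_def)
    then consider "label_rank K = k" | "k - label_rank K = 1"
      by linarith
    then show ?thesis
      unfolding char_term_def by cases (simp_all add: monom_0 monom_Suc neg_one_power_poly)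
  qed
  then have "phi Q k = (\<Sum>K\<in>?C. pCons (if label_rank K = k then (-1) ^ card K else 0)
      [:if label_rank K \<noteq> k then (-1) ^ card K else 0:])"
    unfolding phi_def chi_connected_def connected_label_sets_def by (intro sum.cong) simp_all
  also have "\<dots> = pCons (\<Sum>K\<in>?C. if label_rank K = k then (-1) ^ card K else 0)
      [:\<Sum>K\<in>?C. if label_rank K \<noteq> k then (-1) ^ card K else 0:]"
    by (simp add: sum_pCons)
  also have "(\<Sum>K\<in>?C. if label_rank K \<noteq> k then (-1) ^ card K else 0) = (of_int (beta Q k) :: rat)"
    unfolding beta_def sum.inter_filter[OF fin] of_int_sum by (intro sum.cong) auto
  finally show ?thesis
    by blast
qed

lemma phi_eq:
  assumes "\<forall>r\<in>Q. r \<noteq> 0" "finite Q" "k > 0"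
  shows "phi Q k = smult (of_int (beta Q k)) [:-1, 1:]"
proof -
  obtain c where c: "phi Q k = [:c, of_int (beta Q k):]"
    using phi_eq_pCons[OF assms] by blast
  have "poly (phi Q k) 1 = 0"
    using poly_phi_one[OF assms(2)] assms(3) by (cases k) auto
  then have "c = - of_int (beta Q k)"
    unfolding c by simp
  then show ?thesis
    unfolding c by simp
qed

lemma fps_deriv_eq_imp_eq:
  fixes X Y H :: "'a::{idom, semiring_char_0} fps"
  assumes "fps_deriv X = H * X" "fps_deriv Y = H * Y" "fps_nth X 0 = fps_nth Y 0"
  shows "X = Y"
proof (rule fps_ext)
  fix n show "fps_nth X n = fps_nth Y n"
  proof (induction n rule: less_induct)
    case (less n)
    show ?case
    proof (cases n)
      case (Suc m)
      have "of_nat (Suc m) * fps_nth X (Suc m) = fps_nth (H * X) m"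
        using fps_deriv_nth[of X m] assms(1) by simp
      also have "\<dots> = fps_nth (H * Y) m"
        unfolding fps_mult_nth using less.IH Suc by (intro sum.cong) simp_all
      also have "\<dots> = of_nat (Suc m) * fps_nth Y (Suc m)"
        using fps_deriv_nth[of Y m] assms(2) by simp
      finally show ?thesis
        using Suc by (simp del: of_nat_Suc)
    qed (use assms(3) in simp)
  qed
qed

lemma smult_sum_right: "smult c (\<Sum>x\<in>A. f x) = (\<Sum>x\<in>A. smult c (f x))"
  by (induction A rule: infinite_finite_induct) (simp_all add: smult_add_right)

lemma of_nat_Suc_mult_inverse_fact:
  "of_nat (Suc n) * inverse (fact (Suc n) :: 'a::field_char_0) = inverse (fact n)"
  by (simp add: field_simps del: of_nat_Suc)

definition fps_exp_coeffs :: "'a::field_char_0 poly fps" where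
  "fps_exp_coeffs = Abs_fps (\<lambda>n. [:inverse (fact n):])"

lemma fps_deriv_exp_coeffs: "fps_deriv fps_exp_coeffs = fps_exp_coeffs"
  by (rule fps_ext) (simp add: fps_exp_coeffs_def of_nat_poly of_nat_Suc_mult_inverse_fact del:
    of_nat_Suc)

text \<open>The exponential formula: the recurrence says that c' = p' c for the exponential generating
  functions, which together with c 0 = 1 characterises exp of the generating function of p.\<close>

lemma exponential_formula:
  fixes c p :: "nat \<Rightarrow> 'a::field_char_0 poly"
  assumes c0: "c 0 = 1"
    and rec: "\<And>n. c (Suc n) = (\<Sum>j\<le>n. of_nat (n choose j) * (p (Suc j) * c (n - j)))"
  shows "Abs_fps (\<lambda>n. smult (inverse (fact n)) (c n))
       = fps_compose fps_exp_coeffs (Abs_fps (\<lambda>n. if n = 0 then 0 else smult (inverse (fact n)) (p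
         n)))"
    (is "?C = fps_compose fps_exp_coeffs ?P")
proof (rule fps_deriv_eq_imp_eq)
  show "fps_deriv (fps_compose fps_exp_coeffs ?P) = fps_deriv ?P * fps_compose fps_exp_coeffs ?P"
    using fps_compose_deriv[of ?P fps_exp_coeffs] by (simp add: fps_deriv_exp_coeffs mult.commute)
  show "fps_nth ?C 0 = fps_nth (fps_compose fps_exp_coeffs ?P) 0"
    using c0 by (simp add: fps_exp_coeffs_def)
  show "fps_deriv ?C = fps_deriv ?P * ?C"
  proof (rule fps_ext)
    fix n
    have "fps_nth (fps_deriv ?C) n = smult (inverse (fact n)) (c (Suc n))"
      by (simp add: of_nat_poly of_nat_Suc_mult_inverse_fact mult_ac del: of_nat_Suc)
    also have "\<dots> = (\<Sum>j=0..n.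
        smult (inverse (fact n) * of_nat (n choose j)) (p (Suc j) * c (n - j)))"
      unfolding rec atMost_atLeast0 smult_sum_right
      by (simp add: of_nat_poly smult_smult)
    also have "\<dots> = (\<Sum>j=0..n. fps_nth (fps_deriv ?P) j * fps_nth ?C (n - j))"
    proof (rule sum.cong[OF refl])
      fix j assume "j \<in> {0..n}"
      then have "inverse (fact n) * of_nat (n choose j) =
          (inverse (fact j) * inverse (fact (n - j)) :: 'a)"
        using binomial_fact[of j n, where 'a = 'a] by (simp add: field_simps)
      then show "smult (inverse (fact n) * of_nat (n choose j)) (p (Suc j) * c (n - j))
          = fps_nth (fps_deriv ?P) j * fps_nth ?C (n - j)"
        by (simp add: of_nat_poly of_nat_Suc_mult_inverse_fact mult_smult_left mult_smult_right
            smult_smult mult_ac del: of_nat_Suc fact_Suc)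
    qed
    also have "\<dots> = fps_nth (fps_deriv ?P * ?C) n"
      by (simp add: fps_mult_nth)
    finally show "fps_nth (fps_deriv ?C) n = fps_nth (fps_deriv ?P * ?C) n" .
  qed
qed

theorem egf_chi_eq_exp:
  assumes "finite Q" "\<forall>r\<in>Q. r \<noteq> 0"
  shows "Abs_fps (\<lambda>n. smult (inverse (fact n)) (chi Q n)) = fps_exp_of (b_series (beta Q))"
proof -
  have "Abs_fps (\<lambda>n. smult (inverse (fact n)) (chi Q n))
       = fps_compose fps_exp_coeffs (Abs_fps (\<lambda>n. if n = 0 then 0 else smult (inverse (fact n))
         (phi Q n)))"
    using exponential_formula[OF chi_zero chi_Suc[OF assms(1)]] .
  also have "Abs_fps (\<lambda>n. if n = 0 then 0 else smult (inverse (fact n)) (phi Q n)) = b_series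
    (beta Q)"
    unfolding b_series_def using phi_eq[OF assms(2,1)]
    by (intro arg_cong[where f = Abs_fps] ext) (simp add: smult_smult field_simps)
  finally show ?thesis
    unfolding fps_exp_of_def fps_exp_coeffs_def .
qed

section \<open>The arrangement A_n(a)\<close>

definition gains :: "rat set \<Rightarrow> rat set" where
  "gains a = insert 1 (a \<union> inverse ` a)"

lemma gains_pos: "\<forall>r\<in>a. r > 0 \<Longrightarrow> \<forall>r\<in>gains a. r > 0"
  unfolding gains_def by auto

lemma finite_gains: "finite a \<Longrightarrow> finite (gains a)"
  unfolding gains_def by simp

lemma dotn_unitv: "k < n \<Longrightarrow> dotn n c (unitv k) = c k"
  unfolding dotn_def unitv_def by (simp add: if_distrib cong: if_cong)

lemma dotn_add: "dotn n c (y + z) = dotn n c y + dotn n c z"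
  unfolding dotn_def by (simp add: sum.distrib algebra_simps)

lemma dotn_scale: "dotn n c (vscale r y) = r * dotn n c y"
  unfolding dotn_def vscale_def by (simp add: sum_distrib_left algebra_simps)

lemma dotn_scale_left: "dotn n (vscale r c) y = r * dotn n c y"
  unfolding dotn_def vscale_def by (simp add: sum_distrib_left algebra_simps)

lemma Rn_unitv: "k < n \<Longrightarrow> unitv k \<in> Rn n"
  unfolding Rn_def unitv_def by auto

lemma Rn_zero: "0 \<in> Rn n"
  unfolding Rn_def by simp

lemma Rn_add: "y \<in> Rn n \<Longrightarrow> z \<in> Rn n \<Longrightarrow> y + z \<in> Rn n"
  unfolding Rn_def by simp

lemma Rn_scale: "y \<in> Rn n \<Longrightarrow> vscale r y \<in> Rn n"
  unfolding Rn_def vscale_def by simp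

lemma normal_in_Rn: "x \<in> labels Q {..<n} \<Longrightarrow> normal x \<in> Rn n"
  using normal_supported[of x Q "{..<n}"] unfolding supported_def Rn_def by auto

lemma normal_nonzero: "x \<in> labels Q S \<Longrightarrow> normal x \<noteq> 0"
proof (cases x rule: label_cases)
  case (1 i)
  then show ?thesis by (auto simp: fun_eq_iff unitv_def)
next
  case (2 i j r)
  moreover assume "x \<in> labels Q S"
  ultimately have "normal x i = 1"
    by (simp add: vscale_def unitv_def)
  then show ?thesis
    by (metis zero_fun_apply zero_neq_one)
qed

definition hyperplane :: "nat \<Rightarrow> label \<Rightarrow> (nat \<Rightarrow> real) set" where
  "hyperplane n x = hyp n (normal x) 0"

text \<open>Testing the equation c \<bullet> y = d on 0, on the unit vectors and, for an edge label
  x_i = r x_j, on r e_i + e_j pins down c up to a scalar.\<close>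

lemma hyp_eq_hyperplaneD:
  assumes x: "x \<in> labels Q {..<n}" and c: "c \<in> Rn n" and eq: "hyp n c d = hyperplane n x"
  shows "d = 0 \<and> (\<exists>l. c = vscale l (normal x))"
proof -
  have mem: "dotn n c y = d" if "y \<in> Rn n" "dotn n (normal x) y = 0" for y
    using eq that unfolding hyp_def hyperplane_def by blast
  have d: "d = 0"
    using mem[OF Rn_zero] by (simp add: dotn_def)
  have outside: "c k = 0" if "k \<ge> n" for k
    using c that unfolding Rn_def by blast
  have unit: "c k = 0" if "k < n" "normal x k = 0" for k
    using mem[OF Rn_unitv[OF that(1)]] that d dotn_unitv by simp
  show ?thesis
  proof (cases x rule: label_cases)
    case (1 i)
    have "c k = 0" if "k \<noteq> i" for k
      using unit outside that 1 by (cases "k < n") (auto simp: unitv_def)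
    then have "c = vscale (c i) (normal x)"
      using 1 by (auto simp: fun_eq_iff vscale_def unitv_def)
    then show ?thesis
      using d by blast
  next
    case (2 i j r)
    then have ij: "i < n" "j < n" "i < j"
      using x by auto
    have "c k = 0" if "k \<noteq> i" "k \<noteq> j" for k
      using unit outside that 2 by (cases "k < n") (auto simp: unitv_def vscale_def)
    moreover have "c j = - real_of_rat r * c i"
    proof -
      let ?w = "vscale (real_of_rat r) (unitv i) + unitv j"
      have "?w \<in> Rn n"
        using ij by (intro Rn_add Rn_scale Rn_unitv)
      moreover have "dotn n (normal x) ?w = 0"
        using ij 2 by (simp add: dotn_add dotn_scale dotn_unitv, simp add: vscale_def unitv_def)
      ultimately have "dotn n c ?w = 0"
        using mem d by simp
      then show ?thesis
        using ij by (simp add: dotn_add dotn_scale dotn_unitv)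
    qed
    ultimately have "c = vscale (c i) (normal x)"
      using 2 ij by (auto simp: fun_eq_iff vscale_def unitv_def)
    then show ?thesis
      using d by blast
  qed
qed

lemma normal_Inr_eq_scale_imp_eq:
  assumes "i < j" "r \<noteq> 0" "i' < j'" "r' \<noteq> 0"
    and eq: "normal (Inr (i', j', r')) = vscale l (normal (Inr (i, j, r)))"
  shows "i' = i \<and> j' = j \<and> r' = r"
proof -
  have at: "normal (Inr (i', j', r')) m = l * normal (Inr (i, j, r)) m" for m
    using eq by (simp add: vscale_def)
  have "l \<noteq> 0"
    using at[of i'] assms by (auto simp: unitv_def vscale_def)
  then have "i' = i"
    using at[of i'] at[of i] at[of j] assms by (auto simp: unitv_def vscale_def split: if_splits)
  moreover have "j' = j"
    using at[of j'] at[of i] at[of j] assms \<open>l \<noteq> 0\<close> \<open>i' = i\<close>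
    by (auto simp: unitv_def vscale_def split: if_splits)
  moreover have "l = 1"
    using at[of i] assms \<open>i' = i\<close> \<open>j' = j\<close> by (auto simp: unitv_def vscale_def)
  moreover have "r' = r"
    using at[of j] assms \<open>i' = i\<close> \<open>j' = j\<close> \<open>l = 1\<close> by (auto simp: unitv_def vscale_def)
  ultimately show ?thesis
    by simp
qed

lemma normal_eq_scale_imp_eq:
  assumes Q: "\<forall>r\<in>Q. r \<noteq> 0" and x: "x \<in> labels Q S" and y: "y \<in> labels Q S"
    and eq: "normal y = vscale l (normal x)"
  shows "x = y"
proof -
  have at: "normal y m = l * normal x m" for m
    using eq by (simp add: vscale_def)
  show ?thesis
  proof (cases x rule: label_cases)
    case x1: (1 i)
    show ?thesis
    proof (cases y rule: label_cases)
      case (1 i')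
      then show ?thesis
        using at[of i'] x1 by (auto simp: unitv_def split: if_splits)
    next
      case (2 i' j' r')
      then have "i' < j'" "r' \<noteq> 0"
        using y Q by auto
      then show ?thesis
        using at[of i'] at[of j'] x1 2 by (auto simp: unitv_def vscale_def split: if_splits)
    qed
  next
    case x2: (2 i j r)
    then have ij: "i < j" "r \<noteq> 0"
      using x Q by auto
    show ?thesis
    proof (cases y rule: label_cases)
      case (1 i')
      then show ?thesis
        using at[of i'] at[of i] at[of j] x2 ij by (auto simp: unitv_def vscale_def split:
          if_splits)
    next
      case (2 i' j' r')
      then have "i' < j'" "r' \<noteq> 0"
        using y Q by auto
      moreover have "normal (Inr (i', j', r')) = vscale l (normal (Inr (i, j, r)))"
        using eq x2 2 by simp
      ultimately show ?thesis
        using normal_Inr_eq_scale_imp_eq[OF ij] x2 2 by blast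
    qed
  qed
qed

lemma inj_on_hyperplane:
  assumes "\<forall>r\<in>Q. r \<noteq> 0"
  shows "inj_on (hyperplane n) (labels Q {..<n})"
proof (rule inj_onI)
  fix x y assume x: "x \<in> labels Q {..<n}" and y: "y \<in> labels Q {..<n}"
    and "hyperplane n x = hyperplane n y"
  then obtain l where "normal y = vscale l (normal x)"
    using hyp_eq_hyperplaneD[OF x normal_in_Rn[OF y]] unfolding hyperplane_def by metis
  then show "x = y"
    using normal_eq_scale_imp_eq[OF assms x y] by blast
qed

lemma hyp_scale: "l \<noteq> 0 \<Longrightarrow> hyp n (vscale l c) 0 = hyp n c 0"
  unfolding hyp_def dotn_scale_left by simp

lemma hyp_edge:
  "hyp n (\<lambda>k. unitv i k - real_of_rat r * unitv j k) 0 = hyperplane n (Inr (i, j, r))"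
  by (simp add: hyperplane_def vscale_def fun_diff_def)

lemma hyp_edge_swap:
  assumes "r \<noteq> 0"
  shows "hyp n (\<lambda>k. unitv i k - real_of_rat r * unitv j k) 0 = hyperplane n (Inr (j, i, inverse r))"
proof -
  have "normal (Inr (j, i, inverse r)) =
      vscale (- inverse (real_of_rat r)) (\<lambda>k. unitv i k - real_of_rat r * unitv j k)"
    using assms by (simp add: fun_eq_iff vscale_def of_rat_inverse of_rat_divide field_simps)
  then show ?thesis
    using assms hyp_scale[of "- inverse (real_of_rat r)" n] by (simp add: hyperplane_def)
qed

lemma arrA_subset_hyperplane_image:
  assumes "\<forall>r\<in>a. r > 0"
  shows "arrA n a \<subseteq> hyperplane n ` labels (gains a) {..<n}"
proof
  fix h assume "h \<in> arrA n a"
  then consider (coord) i where "h = hyp n (unitv i) 0" "i < n"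
    | (diag) i j where "h = hyp n (\<lambda>k. unitv i k - unitv j k) 0" "i < j" "j < n"
    | (gain) i j r where "h = hyp n (\<lambda>k. unitv i k - real_of_rat r * unitv j k) 0"
        "i < n" "j < n" "i \<noteq> j" "r \<in> a"
    unfolding arrA_def by blast
  then obtain x where "x \<in> labels (gains a) {..<n}" "h = hyperplane n x"
  proof cases
    case coord
    then show ?thesis
      using that[of "Inl i"] by (simp add: hyperplane_def)
  next
    case diag
    then show ?thesis
      using that[of "Inr (i, j, 1)"] hyp_edge[of n i 1 j] by (simp add: gains_def)
  next
    case gain
    show ?thesis
    proof (cases "i < j")
      case True
      then show ?thesis
        using gain that[of "Inr (i, j, r)"] hyp_edge[of n i r j] by (simp add: gains_def)
    next
      case False
      have "r \<noteq> 0"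
        using assms gain by auto
      then show ?thesis
        using gain False that[of "Inr (j, i, inverse r)"] hyp_edge_swap[of r n i j]
        by (simp add: gains_def)
    qed
  qed
  then show "h \<in> hyperplane n ` labels (gains a) {..<n}"
    by (rule image_eqI[rotated])
qed

lemma hyperplane_image_subset_arrA:
  assumes "\<forall>r\<in>a. r > 0"
  shows "hyperplane n ` labels (gains a) {..<n} \<subseteq> arrA n a"
proof
  fix h assume "h \<in> hyperplane n ` labels (gains a) {..<n}"
  then obtain x where x: "x \<in> labels (gains a) {..<n}" "h = hyperplane n x"
    by blast
  show "h \<in> arrA n a"
  proof (cases x rule: label_cases)
    case (1 i)
    then have "h = hyp n (unitv i) 0" "i < n"
      using x by (simp_all add: hyperplane_def)
    then show ?thesis
      unfolding arrA_def by blast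
  next
    case edge: (2 i j r)
    then have ij: "i < n" "j < n" "i < j" "r \<in> gains a"
      using x by auto
    then consider "r = 1" | "r \<in> a" | s where "r = inverse s" "s \<in> a"
      unfolding gains_def by blast
    then show ?thesis
    proof cases
      case 1
      then have "h = hyp n (\<lambda>k. unitv i k - unitv j k) 0"
        using x edge hyp_edge[of n i 1 j] by simp
      then show ?thesis
        using ij unfolding arrA_def by blast
    next
      case 2
      have "h = hyp n (\<lambda>k. unitv i k - real_of_rat r * unitv j k) 0"
        using x edge hyp_edge[of n i r j] by simp
      then show ?thesis
        using ij 2 unfolding arrA_def by blast
    next
      case 3
      then have "s \<noteq> 0"
        using assms by auto
      then have "h = hyp n (\<lambda>k. unitv j k - real_of_rat s * unitv i k) 0"
        using x edge 3 hyp_edge_swap[of s n j i] by simp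
      moreover have "j \<noteq> i"
        using ij by simp
      ultimately show ?thesis
        using ij 3 unfolding arrA_def by blast
    qed
  qed
qed

lemma arrA_eq_hyperplane_image:
  "\<forall>r\<in>a. r > 0 \<Longrightarrow> arrA n a = hyperplane n ` labels (gains a) {..<n}"
  using arrA_subset_hyperplane_image hyperplane_image_subset_arrA by blast

lemma arr_rank_hyperplane:
  assumes "K \<subseteq> labels Q {..<n}"
  shows "arr_rank n (hyperplane n ` K) = label_rank K"
proof -
  have "normals n (hyperplane n ` K) \<subseteq> V.span (normal ` K)"
  proof
    fix c assume "c \<in> normals n (hyperplane n ` K)"
    then obtain d x where c: "c \<in> Rn n" "x \<in> K" "hyp n c d = hyperplane n x"
      unfolding normals_def by blast
    moreover have "x \<in> labels Q {..<n}"
      using c(2) assms by blast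
    ultimately obtain l where "c = vscale l (normal x)"
      using hyp_eq_hyperplaneD by blast
    then show "c \<in> V.span (normal ` K)"
      using c(2) by (simp add: V.span_base V.span_scale)
  qed
  moreover have "normal ` K \<subseteq> V.span (normals n (hyperplane n ` K))"
  proof (intro image_subsetI V.span_base)
    fix x assume "x \<in> K"
    then have "normal x \<in> Rn n" "normal x \<noteq> 0" "hyp n (normal x) 0 \<in> hyperplane n ` K"
      using normal_in_Rn normal_nonzero assms unfolding hyperplane_def by auto
    then show "normal x \<in> normals n (hyperplane n ` K)"
      unfolding normals_def by blast
  qed
  ultimately have "V.span (normals n (hyperplane n ` K)) = V.span (normal ` K)"
    using V.span_eq by blast
  then show ?thesis
    unfolding arr_rank_def label_rank_def by (rule V.span_eq_dim)
qed

theorem char_poly_arrA: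
  assumes "\<forall>r\<in>a. r > 0"
  shows "char_poly n (arrA n a) = chi (gains a) n"
proof -
  let ?L = "labels (gains a) {..<n}"
  have Q0: "\<forall>r\<in>gains a. r \<noteq> 0"
    using gains_pos[OF assms] by auto
  have inj: "inj_on (hyperplane n) ?L"
    by (rule inj_on_hyperplane[OF Q0])
  have "0 \<in> Rn n \<inter> \<Inter>B" if "B \<subseteq> hyperplane n ` ?L" for B
    using that Rn_zero by (auto simp: hyperplane_def hyp_def dotn_def)
  then have "{B. B \<subseteq> arrA n a \<and> Rn n \<inter> \<Inter>B \<noteq> {}} = Pow (hyperplane n ` ?L)"
    unfolding arrA_eq_hyperplane_image[OF assms] by blast
  then have "{B. B \<subseteq> arrA n a \<and> Rn n \<inter> \<Inter>B \<noteq> {}} = image (hyperplane n) ` Pow ?L"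
    by (simp add: image_Pow_surj)
  then have "char_poly n (arrA n a) =
      (\<Sum>K\<in>Pow ?L. (-1) ^ card (hyperplane n ` K) * monom 1 (n - arr_rank n (hyperplane n ` K)))"
    unfolding char_poly_def by (simp add: sum.reindex[OF inj_on_image_Pow[OF inj]] o_def)
  also have "\<dots> = chi (gains a) n"
    unfolding chi_def chi_on_def char_term_def
  proof (rule sum.cong[OF refl])
    fix K assume "K \<in> Pow ?L"
    moreover from this have "card (hyperplane n ` K) = card K"
      using card_image inj_on_subset[OF inj] by blast
    ultimately show "(-1) ^ card (hyperplane n ` K) * monom 1 (n - arr_rank n (hyperplane n ` K)) =
        (-1) ^ card K * monom 1 (card {..<n} - label_rank K)"
      using arr_rank_hyperplane by simp
  qed
  finally show ?thesis .
qed

theorem char_egf_eq_exp: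
  assumes "finite a" "\<forall>r\<in>a. r > 0"
  shows "char_egf a = fps_exp_of (b_series (beta (gains a)))"
proof -
  have "char_egf a = Abs_fps (\<lambda>n. smult (inverse (fact n)) (chi (gains a) n))"
    unfolding char_egf_def char_poly_arrA[OF assms(2)] ..
  also have "\<dots> = fps_exp_of (b_series (beta (gains a)))"
    using egf_chi_eq_exp[OF finite_gains[OF assms(1)]] gains_pos[OF assms(2)] by auto
  finally show ?thesis .
qed

section \<open>Multiplicatively independent gains\<close>

definition monomial :: "rat set \<Rightarrow> (rat \<Rightarrow> rat) \<Rightarrow> (rat \<Rightarrow> int) \<Rightarrow> rat" where
  "monomial A f e = (\<Prod>s\<in>A. f s powi e s)"

text \<open>The exponent vector of an element of gains a with respect to the basis a (0 for junk).\<close>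

definition exponent :: "rat set \<Rightarrow> rat \<Rightarrow> rat \<Rightarrow> int" where
  "exponent A r =
     (if r \<in> A then (\<lambda>s. if s = r then 1 else 0)
      else if inverse r \<in> A then (\<lambda>s. if s = inverse r then -1 else 0) else (\<lambda>s. 0))"

lemma monomial_add:
  "\<forall>s\<in>A. f s \<noteq> 0 \<Longrightarrow> monomial A f (\<lambda>s. e s + e' s) = monomial A f e * monomial A f e'"
  unfolding monomial_def by (simp add: power_int_add prod.distrib)

lemma monomial_diff:
  assumes "\<forall>s\<in>A. f s \<noteq> 0"
  shows "monomial A f (\<lambda>s. e s - e' s) = monomial A f e / monomial A f e'"
proof -
  have "monomial A f e' \<noteq> 0"
    using assms unfolding monomial_def by (cases "finite A") (auto simp: prod_zero_iff)
  moreover have "monomial A f (\<lambda>s. e s - e' s) * monomial A f e' = monomial A f e"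
    using monomial_add[OF assms, of "\<lambda>s. e s - e' s" e'] by simp
  ultimately show ?thesis
    by (simp add: field_simps)
qed

lemma monomial_pos: "\<forall>s\<in>A. f s > 0 \<Longrightarrow> monomial A f e > 0"
  unfolding monomial_def by (intro prod_pos) simp

lemma monomial_cong: "\<forall>s\<in>A. e s = e' s \<Longrightarrow> \<forall>s\<in>A. f s = f' s \<Longrightarrow> monomial A f e = monomial A f' e'"
  unfolding monomial_def by (rule prod.cong) auto

lemma monomial_zero: "monomial A f (\<lambda>s. 0) = 1"
  unfolding monomial_def by simp

lemma monomial_delta:
  "finite A \<Longrightarrow> r \<in> A \<Longrightarrow> monomial A f (\<lambda>s. if s = r then c else 0) = f r powi c"
  unfolding monomial_def by (simp add: if_distrib prod.delta cong: if_cong)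

lemma monomial_exponent:
  assumes "finite A"
  shows "monomial A f (exponent A r) =
    (if r \<in> A then f r else if inverse r \<in> A then inverse (f (inverse r)) else 1)"
  unfolding exponent_def using monomial_delta[OF assms] monomial_zero
  by (auto simp: power_int_minus)

locale mult_independent =
  fixes a :: "rat set"
  assumes finite: "finite a" and pos: "\<forall>r\<in>a. r > 0" and indep: "mult_indep a"
begin

lemma monomial_id_nonzero: "\<forall>s\<in>a. s \<noteq> 0"
  using pos by auto

lemma monomial_id_eqD: "monomial a (\<lambda>s. s) e = monomial a (\<lambda>s. s) e' \<Longrightarrow> \<forall>s\<in>a. e s = e' s"
proof -
  assume eq: "monomial a (\<lambda>s. s) e = monomial a (\<lambda>s. s) e'"
  have "monomial a (\<lambda>s. s) e' > 0"
    using monomial_pos[of a "\<lambda>s. s" e'] pos by simp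
  then have "monomial a (\<lambda>s. s) (\<lambda>s. e s - e' s) = 1"
    unfolding monomial_diff[OF monomial_id_nonzero] eq by simp
  then show ?thesis
    using indep unfolding mult_indep_def monomial_def by fastforce
qed

lemma one_not_in: "1 \<notin> a"
proof
  assume "1 \<in> a"
  then have "monomial a (\<lambda>s. s) (\<lambda>s. if s = 1 then 1 else 0) = monomial a (\<lambda>s. s) (\<lambda>s. 0)"
    using monomial_delta[OF finite] monomial_zero by simp
  then show False
    using monomial_id_eqD \<open>1 \<in> a\<close> by fastforce
qed

lemma inverse_not_in:
  assumes "r \<in> a"
  shows "inverse r \<notin> a"
proof
  assume ir: "inverse r \<in> a"
  have "r \<noteq> inverse r"
  proof
    assume "r = inverse r"
    then have "r * r = 1"
      using pos assms by (metis less_irrefl right_inverse)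
    then have "(r - 1) * (r + 1) = 0"
      by (simp add: algebra_simps)
    moreover have "r + 1 \<noteq> 0"
      using pos assms by (metis add_pos_pos less_irrefl zero_less_one)
    ultimately show False
      using one_not_in assms by simp
  qed
  let ?e = "\<lambda>s. (if s = r then 1 else 0) + (if s = inverse r then 1 else (0::int))"
  have "monomial a (\<lambda>s. s) ?e = r * inverse r"
    using monomial_add[OF monomial_id_nonzero] monomial_delta[OF finite assms]
      monomial_delta[OF finite ir] by simp
  also have "\<dots> = monomial a (\<lambda>s. s) (\<lambda>s. 0)"
    using pos assms monomial_zero by (metis less_irrefl right_inverse)
  finally have "?e r = 0"
    using monomial_id_eqD assms by blast
  then show False
    using \<open>r \<noteq> inverse r\<close> by simp
qed

lemma monomial_id_exponent: "r \<in> gains a \<Longrightarrow> monomial a (\<lambda>s. s) (exponent a r) = r"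
  unfolding monomial_exponent[OF finite] gains_def using one_not_in by auto

end

text \<open>Modulo W = span (normal ` K), every unit vector e_i is a unique multiple g e_v (the
  potential of i); the gain g is a monomial in a, and independence determines its exponent
  vector.\<close>

locale deficient_component = mult_independent +
  fixes K :: "label set" and S :: "nat set" and v :: nat
  assumes finite_S: "finite S" and K: "K \<subseteq> labels (gains a) S" and v: "v \<in> S"
    and connected: "connected_from K v S" and deficient: "unitv v \<notin> V.span (normal ` K)"
begin

definition potential :: "nat \<Rightarrow> (rat \<Rightarrow> int) \<Rightarrow> bool" where
  "potential i e \<longleftrightarrow> unitv i - vscale (real_of_rat (monomial a (\<lambda>s. s) e)) (unitv v) \<in> V.span
    (normal ` K)"

lemma gain_pos: "Inr (y, z, r) \<in> K \<Longrightarrow> r > 0"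
  using Inr_in_subset_labels[OF K] gains_pos[OF pos] by blast

lemma monomial_id_exponent_edge: "Inr (y, z, r) \<in> K \<Longrightarrow> monomial a (\<lambda>s. s) (exponent a r) = r"
  using Inr_in_subset_labels[OF K] monomial_id_exponent by blast

lemma normal_in_span: "x \<in> K \<Longrightarrow> normal x \<in> V.span (normal ` K)"
  by (intro V.span_base imageI)

lemma potential_forward:
  assumes "potential y e" "Inr (y, z, r) \<in> K"
  shows "potential z (\<lambda>s. e s - exponent a r s)"
proof -
  have r: "real_of_rat r \<noteq> 0"
    using gain_pos[OF assms(2)] by simp
  have m: "monomial a (\<lambda>s. s) (\<lambda>s. e s - exponent a r s) = monomial a (\<lambda>s. s) e / r"
    using monomial_diff[OF monomial_id_nonzero] monomial_id_exponent_edge[OF assms(2)] by simp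
  have "vscale (inverse (real_of_rat r))
      ((unitv y - vscale (real_of_rat (monomial a (\<lambda>s. s) e)) (unitv v)) - normal (Inr (y, z, r)))
      = unitv z - vscale (real_of_rat (monomial a (\<lambda>s. s) (\<lambda>s. e s - exponent a r s))) (unitv v)"
    unfolding m using r by (simp add: fun_eq_iff vscale_def of_rat_divide field_simps)
  then show ?thesis
    using V.span_scale[OF V.span_diff[OF assms(1)[unfolded potential_def]
        normal_in_span[OF assms(2)]]]
    unfolding potential_def by metis
qed

lemma potential_backward:
  assumes "potential y e" "Inr (z, y, r) \<in> K"
  shows "potential z (\<lambda>s. e s + exponent a r s)"
proof -
  have m: "monomial a (\<lambda>s. s) (\<lambda>s. e s + exponent a r s) = monomial a (\<lambda>s. s) e * r"
    using monomial_add[OF monomial_id_nonzero] monomial_id_exponent_edge[OF assms(2)] by simp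
  have "normal (Inr (z, y, r)) + vscale (real_of_rat r)
      (unitv y - vscale (real_of_rat (monomial a (\<lambda>s. s) e)) (unitv v))
      = unitv z - vscale (real_of_rat (monomial a (\<lambda>s. s) (\<lambda>s. e s + exponent a r s))) (unitv v)"
    unfolding m by (simp add: fun_eq_iff vscale_def of_rat_mult field_simps)
  then show ?thesis
    using V.span_add[OF normal_in_span[OF assms(2)] V.span_scale[OF assms(1)[unfolded
      potential_def]]]
    unfolding potential_def by metis
qed

lemma potential_exists:
  assumes "i \<in> S"
  shows "\<exists>e. potential i e"
proof -
  have "(adjacent K)\<^sup>*\<^sup>* v i"
    using connected assms unfolding connected_from_def component_def by blast
  then show ?thesis
  proof (induction rule: rtranclp_induct)
    case base
    have "potential v (\<lambda>s. 0)"
      unfolding potential_def monomial_zero by (simp add: V.span_zero vscale_def)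
    then show ?case by blast
  next
    case (step y z)
    then obtain e where "potential y e"
      by blast
    moreover obtain r where "Inr (y, z, r) \<in> K \<or> Inr (z, y, r) \<in> K"
      using step.hyps(2) unfolding adjacent_def by blast
    ultimately show ?case
      using potential_forward potential_backward by blast
  qed
qed

lemma potential_unique:
  assumes "potential i e1" "potential i e2"
  shows "\<forall>s\<in>a. e1 s = e2 s"
proof (rule monomial_id_eqD, rule ccontr)
  assume ne: "monomial a (\<lambda>s. s) e1 \<noteq> monomial a (\<lambda>s. s) e2"
  let ?u1 = "unitv i - vscale (real_of_rat (monomial a (\<lambda>s. s) e1)) (unitv v)"
  let ?u2 = "unitv i - vscale (real_of_rat (monomial a (\<lambda>s. s) e2)) (unitv v)"
  let ?c = "real_of_rat (monomial a (\<lambda>s. s) e2) - real_of_rat (monomial a (\<lambda>s. s) e1)"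
  have "vscale (inverse ?c) (?u1 - ?u2) \<in> V.span (normal ` K)"
    by (rule V.span_scale[OF V.span_diff[OF assms[unfolded potential_def]]])
  moreover have "vscale (inverse ?c) (?u1 - ?u2) = unitv v"
    using ne by (simp add: fun_eq_iff vscale_def field_simps)
  ultimately show False
    using deficient by simp
qed

lemma no_coordinate_label: "Inl i \<notin> K"
proof
  assume i: "Inl i \<in> K"
  then have "i \<in> S"
    using subsetD[OF K i] by simp
  then obtain e where e: "potential i e"
    using potential_exists by blast
  have "unitv i \<in> V.span (normal ` K)"
    using normal_in_span[OF i] by simp
  then have "unitv i - (unitv i - vscale (real_of_rat (monomial a (\<lambda>s. s) e)) (unitv v))
      \<in> V.span (normal ` K)"
    using e unfolding potential_def by (rule V.span_diff)
  then have "vscale (real_of_rat (monomial a (\<lambda>s. s) e)) (unitv v) \<in> V.span (normal ` K)"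
    by simp
  then have "vscale (inverse (real_of_rat (monomial a (\<lambda>s. s) e)))
      (vscale (real_of_rat (monomial a (\<lambda>s. s) e)) (unitv v)) \<in> V.span (normal ` K)"
    by (rule V.span_scale)
  moreover have "real_of_rat (monomial a (\<lambda>s. s) e) \<noteq> 0"
    using monomial_pos[of a "\<lambda>s. s" e] pos by simp
  then have "vscale (inverse (real_of_rat (monomial a (\<lambda>s. s) e)))
      (vscale (real_of_rat (monomial a (\<lambda>s. s) e)) (unitv v)) = unitv v"
    by (simp add: vscale_def fun_eq_iff)
  ultimately show False
    using deficient by simp
qed

lemma obtain_potentials:
  obtains E where "\<And>i. i \<in> S \<Longrightarrow> potential i (E i)"
    and "\<And>i j r. Inr (i, j, r) \<in> K \<Longrightarrow> \<forall>s\<in>a. E j s = E i s - exponent a r s"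
proof -
  define E where "E i = (SOME e. potential i e)" for i
  have E: "potential i (E i)" if "i \<in> S" for i
    using potential_exists[OF that] unfolding E_def by (rule someI_ex)
  have "\<forall>s\<in>a. E j s = E i s - exponent a r s" if "Inr (i, j, r) \<in> K" for i j r
  proof -
    have "i \<in> S" "j \<in> S"
      using Inr_in_subset_labels[OF K that] by auto
    then show ?thesis
      using potential_unique[OF E potential_forward[OF E that]] by simp
  qed
  with E show ?thesis
    by (rule that)
qed

end

definition transfer_gain :: "rat set \<Rightarrow> (rat \<Rightarrow> rat) \<Rightarrow> rat \<Rightarrow> rat" where
  "transfer_gain a \<sigma> r = monomial a \<sigma> (exponent a r)"

fun transfer_label :: "rat set \<Rightarrow> (rat \<Rightarrow> rat) \<Rightarrow> label \<Rightarrow> label" where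
  "transfer_label a \<sigma> (Inl i) = Inl i"
| "transfer_label a \<sigma> (Inr (i, j, r)) = Inr (i, j, transfer_gain a \<sigma> r)"

lemma adjacent_transfer_label: "adjacent (transfer_label a \<sigma> ` K) = adjacent K"
proof (intro ext)
  fix i j
  have "Inr (i, j, r') \<in> transfer_label a \<sigma> ` K \<longleftrightarrow> (\<exists>r. Inr (i, j, r) \<in> K \<and> r' = transfer_gain a \<sigma>
    r)"
    for i j r'
  proof
    assume "Inr (i, j, r') \<in> transfer_label a \<sigma> ` K"
    then obtain x where x: "x \<in> K" "Inr (i, j, r') = transfer_label a \<sigma> x"
      unfolding image_iff by blast
    then show "\<exists>r. Inr (i, j, r) \<in> K \<and> r' = transfer_gain a \<sigma> r"
      by (cases x rule: label_cases) auto
  next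
    assume "\<exists>r. Inr (i, j, r) \<in> K \<and> r' = transfer_gain a \<sigma> r"
    then show "Inr (i, j, r') \<in> transfer_label a \<sigma> ` K"
      by (auto intro: image_eqI[of _ _ "Inr (i, j, _)"])
  qed
  then show "adjacent (transfer_label a \<sigma> ` K) i j = adjacent K i j"
    unfolding adjacent_def by blast
qed

lemma connected_from_transfer_label:
  "connected_from (transfer_label a \<sigma> ` K) v S = connected_from K v S"
  unfolding connected_from_def component_def adjacent_transfer_label ..

lemma sum_unitv_mult: "finite S \<Longrightarrow> i \<in> S \<Longrightarrow> (\<Sum>m\<in>S. unitv i m * c m) = c i"
  by (simp add: unitv_def if_distrib[of "\<lambda>x. x * _"] cong: if_cong)

locale gain_transfer = A: mult_independent a + B: mult_independent a' for a a' +
  fixes \<sigma> :: "rat \<Rightarrow> rat"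
  assumes bij: "bij_betw \<sigma> a a'"
begin

lemma \<sigma>_in: "s \<in> a \<Longrightarrow> \<sigma> s \<in> a'"
  using bij bij_betwE by blast

lemma \<sigma>_pos: "s \<in> a \<Longrightarrow> \<sigma> s > 0"
  using \<sigma>_in B.pos by blast

lemma \<sigma>_nonzero: "\<forall>s\<in>a. \<sigma> s \<noteq> 0"
  using \<sigma>_pos by fastforce

text \<open>With p m the gain of the vertex m with every generator s replaced by \<sigma> s, the linear form
  L y = (\<Sum>m\<in>S. y m * p m) vanishes on the transferred normals but not on e_v.\<close>

lemma unitv_not_in_span_transfer:
  assumes "deficient_component a K S v"
  shows "unitv v \<notin> V.span (normal ` transfer_label a \<sigma> ` K)"
proof -
  interpret D: deficient_component a K S v by (fact assms)
  obtain E where E: "\<And>i. i \<in> S \<Longrightarrow> D.potential i (E i)"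
    and edge: "\<And>i j r. Inr (i, j, r) \<in> K \<Longrightarrow> \<forall>s\<in>a. E j s = E i s - exponent a r s"
    using D.obtain_potentials by blast
  define p where "p m = real_of_rat (monomial a \<sigma> (E m))" for m
  define L where "L y = (\<Sum>m\<in>S. y m * p m)" for y :: "nat \<Rightarrow> real"
  have "V.subspace {y. L y = 0}"
    unfolding V.subspace_def L_def
    by (auto simp: vscale_def sum.distrib algebra_simps sum_distrib_left[symmetric])
  moreover have "L (normal x) = 0" if x: "x \<in> transfer_label a \<sigma> ` K" for x
  proof -
    obtain y where y: "y \<in> K" "x = transfer_label a \<sigma> y"
      using x by blast
    then obtain i j r where yij: "y = Inr (i, j, r)"
      using D.no_coordinate_label by (cases y rule: label_cases) auto
    have ij: "i \<in> S" "j \<in> S"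
      using Inr_in_subset_labels[OF D.K] y(1) yij by auto
    have "monomial a \<sigma> (E i) = monomial a \<sigma> (\<lambda>s. (E i s - exponent a r s) + exponent a r s)"
      by simp
    also have "\<dots> = monomial a \<sigma> (E j) * transfer_gain a \<sigma> r"
      unfolding transfer_gain_def monomial_add[OF \<sigma>_nonzero]
      using edge[OF y(1)[unfolded yij]] by (simp add: monomial_cong)
    finally have "p i = real_of_rat (transfer_gain a \<sigma> r) * p j"
      unfolding p_def by (simp add: of_rat_mult)
    have "L (normal x) = (\<Sum>m\<in>S. unitv i m * p m)
        - real_of_rat (transfer_gain a \<sigma> r) * (\<Sum>m\<in>S. unitv j m * p m)"
      unfolding L_def y(2) yij by (simp add: vscale_def sum_subtractf sum_distrib_left
        algebra_simps)
    also have "\<dots> = 0"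
      using sum_unitv_mult[OF D.finite_S ij(1)] sum_unitv_mult[OF D.finite_S ij(2)]
        \<open>p i = real_of_rat (transfer_gain a \<sigma> r) * p j\<close> by simp
    finally show ?thesis .
  qed
  ultimately have "V.span (normal ` transfer_label a \<sigma> ` K) \<subseteq> {y. L y = 0}"
    by (intro V.span_minimal) auto
  moreover have "monomial a \<sigma> (E v) > 0"
    using monomial_pos[of a \<sigma>] \<sigma>_pos by blast
  then have "L (unitv v) \<noteq> 0"
    using sum_unitv_mult[OF D.finite_S D.v] unfolding L_def p_def by simp
  ultimately show ?thesis
    by blast
qed

end

lemma gains_cases: "r \<in> gains a \<Longrightarrow> r = 1 \<or> r \<in> a \<or> (r \<notin> a \<and> inverse r \<in> a)"
  unfolding gains_def by auto

context gain_transfer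
begin

definition \<sigma>' :: "rat \<Rightarrow> rat" where
  "\<sigma>' = inv_into a \<sigma>"

lemma inverse_transfer: "gain_transfer a' a \<sigma>'"
  unfolding \<sigma>'_def
  by (intro gain_transfer.intro gain_transfer_axioms.intro bij_betw_inv_into[OF bij]
      A.mult_independent_axioms B.mult_independent_axioms)

lemma \<sigma>'_\<sigma>: "s \<in> a \<Longrightarrow> \<sigma>' (\<sigma> s) = s"
  unfolding \<sigma>'_def using bij by (simp add: bij_betw_def)

lemma inv_into_\<sigma>': "s \<in> a \<Longrightarrow> inv_into a' \<sigma>' s = \<sigma> s"
  unfolding \<sigma>'_def by (rule inv_into_inv_into_eq[OF bij])

lemma transfer_gain_eq:
  "transfer_gain a \<sigma> r = (if r \<in> a then \<sigma> r else if inverse r \<in> a then inverse (\<sigma> (inverse r))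
    else 1)"
  unfolding transfer_gain_def by (rule monomial_exponent[OF A.finite])

lemma transfer_gain_in_gains: "r \<in> gains a \<Longrightarrow> transfer_gain a \<sigma> r \<in> gains a'"
  using gains_cases[of r a] A.one_not_in \<sigma>_in unfolding transfer_gain_eq gains_def by auto

lemma transfer_gain_inverse: "r \<in> gains a \<Longrightarrow> transfer_gain a' \<sigma>' (transfer_gain a \<sigma> r) = r"
proof -
  interpret T': gain_transfer a' a \<sigma>'
    by (rule inverse_transfer)
  assume r: "r \<in> gains a"
  consider "r = 1" | "r \<in> a" | "r \<notin> a" "inverse r \<in> a"
    using gains_cases[OF r] by blast
  then show ?thesis
  proof cases
    case 1
    then show ?thesis
      using A.one_not_in B.one_not_in unfolding T'.transfer_gain_eq transfer_gain_eq by simp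
  next
    case 2
    then show ?thesis
      using \<sigma>_in \<sigma>'_\<sigma> unfolding T'.transfer_gain_eq transfer_gain_eq by simp
  next
    case 3
    then have "\<sigma> (inverse r) \<in> a'"
      using \<sigma>_in by simp
    then have "inverse (\<sigma> (inverse r)) \<notin> a'"
      using B.inverse_not_in by blast
    then show ?thesis
      using 3 \<sigma>'_\<sigma> \<open>\<sigma> (inverse r) \<in> a'\<close> unfolding T'.transfer_gain_eq transfer_gain_eq by simp
  qed
qed

lemma transfer_label_labels: "x \<in> labels (gains a) S \<Longrightarrow> transfer_label a \<sigma> x \<in> labels (gains a') S"
  by (cases x rule: label_cases) (auto simp: transfer_gain_in_gains)

lemma transfer_label_inverse:
  "x \<in> labels (gains a) S \<Longrightarrow> transfer_label a' \<sigma>' (transfer_label a \<sigma> x) = x"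
  by (cases x rule: label_cases) (auto simp: transfer_gain_inverse)

lemma inj_on_transfer_label: "inj_on (transfer_label a \<sigma>) (labels (gains a) S)"
  by (metis transfer_label_inverse inj_onI)

lemma transfer_label_inverse':
  assumes "y \<in> labels (gains a') S"
  shows "transfer_label a \<sigma> (transfer_label a' \<sigma>' y) = y"
proof -
  interpret T': gain_transfer a' a \<sigma>'
    by (rule inverse_transfer)
  have "transfer_gain a (inv_into a' \<sigma>') r = transfer_gain a \<sigma> r" for r
    unfolding transfer_gain_def using inv_into_\<sigma>' by (intro monomial_cong) auto
  then have "transfer_label a (inv_into a' \<sigma>') x = transfer_label a \<sigma> x" for x
    by (cases x rule: label_cases) auto
  then show ?thesis
    using T'.transfer_label_inverse[OF assms] unfolding T'.\<sigma>'_def by simp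
qed

lemma transfer_connected_label_sets:
  "K \<in> connected_label_sets (gains a) k \<Longrightarrow> transfer_label a \<sigma> ` K \<in> connected_label_sets (gains a')
    k"
  unfolding connected_label_sets_def using transfer_label_labels
  by (auto simp: connected_from_transfer_label)

lemma label_rank_transfer:
  assumes K: "K \<in> connected_label_sets (gains a) k"
  shows "label_rank (transfer_label a \<sigma> ` K) = label_rank K"
proof (cases "k = 0")
  case True
  then show ?thesis
    using K unfolding connected_label_sets_def by simp
next
  case False
  interpret T': gain_transfer a' a \<sigma>'
    by (rule inverse_transfer)
  let ?K' = "transfer_label a \<sigma> ` K"
  have KL: "K \<subseteq> labels (gains a) {..<k}" and cK: "connected_from K (k - 1) {..<k}"
    using K unfolding connected_label_sets_def by auto
  have K'L: "?K' \<subseteq> labels (gains a') {..<k}" and cK': "connected_from ?K' (k - 1) {..<k}"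
    using transfer_connected_label_sets[OF K] unfolding connected_label_sets_def by auto
  have K_back: "transfer_label a' \<sigma>' ` ?K' = K"
    using transfer_label_inverse KL by (force simp: image_image)
  have v: "k - 1 \<in> {..<k}"
    using False by simp
  have D: "deficient_component a K {..<k} (k - 1)" if "unitv (k - 1) \<notin> V.span (normal ` K)"
    by (intro deficient_component.intro A.mult_independent_axioms deficient_component_axioms.intro
        finite_lessThan KL v cK that)
  have D': "deficient_component a' ?K' {..<k} (k - 1)" if "unitv (k - 1) \<notin> V.span (normal ` ?K')"
    by (intro deficient_component.intro B.mult_independent_axioms deficient_component_axioms.intro
        finite_lessThan K'L v cK' that)
  have "unitv (k - 1) \<in> V.span (normal ` K) \<longleftrightarrow> unitv (k - 1) \<in> V.span (normal ` ?K')"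
  proof
    assume "unitv (k - 1) \<in> V.span (normal ` K)"
    then show "unitv (k - 1) \<in> V.span (normal ` ?K')"
      using T'.unitv_not_in_span_transfer[OF D', unfolded K_back] by blast
  next
    assume "unitv (k - 1) \<in> V.span (normal ` ?K')"
    then show "unitv (k - 1) \<in> V.span (normal ` K)"
      using unitv_not_in_span_transfer[OF D] by blast
  qed
  moreover have "\<forall>r\<in>gains a. r \<noteq> 0" "\<forall>r\<in>gains a'. r \<noteq> 0"
    using gains_pos[OF A.pos] gains_pos[OF B.pos] by auto
  ultimately show ?thesis
    using label_rank_connected(1)[OF _ finite_gains[OF A.finite] finite_lessThan v KL cK]
      label_rank_connected(1)[OF _ finite_gains[OF B.finite] finite_lessThan v K'L cK']
    by simp
qed

lemma image_transfer_rank_deficient: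
  "image (transfer_label a \<sigma>) ` {K. K \<in> connected_label_sets (gains a) k \<and> label_rank K \<noteq> k}
    = {K. K \<in> connected_label_sets (gains a') k \<and> label_rank K \<noteq> k}"
  (is "_ ` ?A = ?B")
proof (intro equalityI subsetI)
  fix K' assume "K' \<in> image (transfer_label a \<sigma>) ` ?A"
  then show "K' \<in> ?B"
    using transfer_connected_label_sets label_rank_transfer by auto
next
  interpret T': gain_transfer a' a \<sigma>'
    by (rule inverse_transfer)
  fix K' assume K': "K' \<in> ?B"
  let ?K = "transfer_label a' \<sigma>' ` K'"
  have "?K \<in> connected_label_sets (gains a) k"
    using T'.transfer_connected_label_sets K' by simp
  moreover have "transfer_label a \<sigma> ` ?K = K'"
    using transfer_label_inverse' K' unfolding connected_label_sets_def by (force simp: image_image)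
  moreover from calculation have "label_rank ?K \<noteq> k"
    using label_rank_transfer K' by force
  ultimately show "K' \<in> image (transfer_label a \<sigma>) ` ?A"
    by (intro image_eqI[of _ _ ?K]) simp_all
qed

theorem beta_transfer: "beta (gains a) k = beta (gains a') k"
proof -
  let ?A = "{K. K \<in> connected_label_sets (gains a) k \<and> label_rank K \<noteq> k}"
  have inj: "inj_on (image (transfer_label a \<sigma>)) ?A"
    by (rule inj_on_subset[OF inj_on_image_Pow[OF inj_on_transfer_label[of "{..<k}"]]])
      (auto simp: connected_label_sets_def)
  have "card (transfer_label a \<sigma> ` K) = card K" if "K \<in> ?A" for K
    using that card_image inj_on_subset[OF inj_on_transfer_label]
    unfolding connected_label_sets_def by blast
  then have "beta (gains a) k = (\<Sum>K\<in>?A. (-1) ^ card (transfer_label a \<sigma> ` K))"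
    unfolding beta_def by simp
  also have "\<dots> = (\<Sum>K\<in>image (transfer_label a \<sigma>) ` ?A. (-1) ^ card K)"
    by (simp add: sum.reindex[OF inj] o_def)
  also have "\<dots> = beta (gains a') k"
    unfolding beta_def image_transfer_rank_deficient ..
  finally show ?thesis .
qed

end

lemma beta_gains_eq_if_card_eq:
  assumes "mult_independent a" "mult_independent a'" "card a = card a'"
  shows "beta (gains a) = beta (gains a')"
proof -
  obtain \<sigma> where "bij_betw \<sigma> a a'"
    using finite_same_card_bij mult_independent.finite assms by metis
  then interpret gain_transfer a a' \<sigma>
    using assms by (intro gain_transfer.intro gain_transfer_axioms.intro)
  show ?thesis
    using beta_transfer by (intro ext)
qed

theorem mainTheorem4:
  shows "(\<forall>a :: rat set. finite a \<and> (\<forall>r\<in>a. r > 0 \<and> r \<noteq> 1) \<longrightarrow>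
           (\<exists>b :: nat \<Rightarrow> int. char_egf a = fps_exp_of (b_series b)))
       \<and> (\<exists>\<beta> :: nat \<Rightarrow> nat \<Rightarrow> int. \<forall>a :: rat set.
           finite a \<and> (\<forall>r\<in>a. r > 0 \<and> r \<noteq> 1) \<and> mult_indep a \<longrightarrow>
           char_egf a = fps_exp_of (b_series (\<beta> (card a))))"
proof (intro conjI allI impI)
  fix a :: "rat set"
  assume a: "finite a \<and> (\<forall>r\<in>a. r > 0 \<and> r \<noteq> 1)"
  then have "char_egf a = fps_exp_of (b_series (beta (gains a)))"
    by (intro char_egf_eq_exp) auto
  then show "\<exists>b. char_egf a = fps_exp_of (b_series b)"
    by blast
next
  let ?admissible = "\<lambda>a :: rat set. finite a \<and> (\<forall>r\<in>a. r > 0 \<and> r \<noteq> 1) \<and> mult_indep a"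
  define rep where "rep m = (SOME a. ?admissible a \<and> card a = m)" for m
  show "\<exists>\<beta>. \<forall>a. ?admissible a \<longrightarrow> char_egf a = fps_exp_of (b_series (\<beta> (card a)))"
  proof (intro exI allI impI)
    fix a :: "rat set"
    assume a: "?admissible a"
    then have "\<exists>b. ?admissible b \<and> card b = card a"
      by blast
    then have rep: "?admissible (rep (card a)) \<and> card (rep (card a)) = card a"
      unfolding rep_def by (rule someI_ex)
    have "char_egf a = fps_exp_of (b_series (beta (gains a)))"
      using a by (intro char_egf_eq_exp) auto
    also have "beta (gains a) = beta (gains (rep (card a)))"
      using a rep by (intro beta_gains_eq_if_card_eq mult_independent.intro) auto
    finally show "char_egf a = fps_exp_of (b_series (beta (gains (rep (card a)))))" .
  qed
qed

end
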